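(* (a) If $A\in M_2(\mathbb R)$ is not normal, then $\mathcal M_{\mathbb R}(\exp A)<\|A\|_2$. (b) If $A\in M_2(\mathbb C)$ is not normal, then $\mathcal M_{\mathbb C}(\exp A)<\|A\|_2$.
   Context: $\|\cdot\|_2$ is the operator norm. For $\mathbb F\in\{\mathbb R,\mathbb C\}$ and $A\in M_n(\mathbb F)$, the Magnus exponent is $\mathcal M_{\mathbb F}(A)=\inf\{\sum_{i=1}^k\|B_i\|_2 : k\ge1,\ B_1,\dots,B_k\in M_n(\mathbb F),\ \exp(B_k)\cdots\exp(B_1)=A\}$ (with $\inf\emptyset=+\infty$); equivalently, the infimum of $\int\|\phi(\theta)\|_2\,\mathrm d\theta$ over integrable $M_n(\mathbb F)$-valued densities $\phi$ whose time-ordered exponential (the value at the endpoint of the solution of $Z'=\phi Z$, $Z(\text{start})=\mathrm{Id}$) equals $A$. *)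

theory Defs
  imports "HOL-Analysis.Analysis"
begin

primrec matpow :: "'a::semiring_1^'n^'n \<Rightarrow> nat \<Rightarrow> 'a^'n^'n" where
  "matpow A 0 = mat 1"
| "matpow A (Suc k) = A ** matpow A k"

definition mexp :: "'a::{real_normed_field,banach}^'n^'n \<Rightarrow> 'a^'n^'n" where
  "mexp A = (\<Sum>k. (1 / fact k) *\<^sub>R matpow A k)"

definition opnorm :: "'a::real_normed_field^'n^'n \<Rightarrow> real" where
  "opnorm A = onorm (\<lambda>x. A *v x)"

definition ctranspose :: "complex^'n^'m \<Rightarrow> complex^'m^'n" where
  "ctranspose A = (\<chi> i j. cnj (A $ j $ i))"

definition normal_real :: "real^'n^'n \<Rightarrow> bool" where
  "normal_real A \<longleftrightarrow> A ** transpose A = transpose A ** A"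

definition normal_complex :: "complex^'n^'n \<Rightarrow> bool" where
  "normal_complex A \<longleftrightarrow> A ** ctranspose A = ctranspose A ** A"

text \<open>Magnus exponent: infimum of \<open>\<Sum>\<^sub>i \<parallel>B\<^sub>i\<parallel>\<^sub>2\<close> over all finite nonempty lists
  \<open>[B\<^sub>1,\<dots>,B\<^sub>k]\<close> with \<open>exp B\<^sub>k \<cdots> exp B\<^sub>1 = A\<close>; infimum of the empty set is \<open>\<infinity>\<close>.
  The field is determined by the scalar type (real or complex).\<close>
definition magnus :: "'a::{real_normed_field,banach}^'n^'n \<Rightarrow> ereal" where
  "magnus A = Inf {ereal (\<Sum>B\<leftarrow>Bs. opnorm B) | Bs.
      Bs \<noteq> [] \<and> fold (\<lambda>B P. mexp B ** P) Bs (mat 1) = A}"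

end

(*
  For a non-normal A we exhibit exp A = exp B\<^sub>2 exp B\<^sub>1 (or exp A = exp B) with
  \<parallel>B\<^sub>1\<parallel> + \<parallel>B\<^sub>2\<parallel> < \<parallel>A\<parallel>.

  Complex case: by Schur, A is unitarily similar to T = [[a, b], [0, d]] with b \<noteq> 0, and unitary
  conjugation preserves exponentials and norms. The norm of [[p, q], [0, r]] depends only on
  |p|, |q|, |r| and is strictly concave in |q|. If exp(a/2) \<noteq> exp(d/2), exp T is the product of the
  exponentials of [[a/2, q\<^sub>i], [0, d/2]] with |q\<^sub>1|\<^sup>2 + |q\<^sub>2|\<^sup>2 < 2|b/2|\<^sup>2, which is cheaper by concavity.
  If exp(a/2) = exp(d/2) but a \<noteq> d, exp T = exp(diag(a, d)). If a = d, use the two factors with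
  diagonals (a/2 \<plusminus> x, a/2 \<mp> x) and a suitable common corner entry, for small x > 0.

  Real case: A is the real-linear map \<xi> \<mapsto> z\<xi> + w cnj \<xi> on \<complex>, so \<parallel>A\<parallel> = |z| + |w|, and A is non-normal
  iff w \<noteq> 0 and Im z \<noteq> 0. Then exp A = e\<^bsup>Re z\<^esup> (\<xi> \<mapsto> m\<xi> + n cnj \<xi>) with |m|\<^sup>2 - |n|\<^sup>2 = 1, the product of
  the rotation-dilation exp(Re z + i Arg m) and a symmetric exponential of norm \<rho> = arsinh |n|.
  Elementary inequalities for sin, sinh and t cot t give |Arg m| < |Im z| and \<rho> < |w| in each of
  the elliptic, parabolic and hyperbolic cases |w| <, =, > |Im z|.
*)

theory Submission
  imports Defs
begin

section \<open>Two-by-two matrices\<close>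

definition mat2 :: "'a \<Rightarrow> 'a \<Rightarrow> 'a \<Rightarrow> 'a \<Rightarrow> 'a^2^2" where
  "mat2 a b c d = (\<chi> i j. if i = 1 then (if j = 1 then a else b) else (if j = 1 then c else d))"

lemma mat2_nth [simp]:
  "mat2 a b c d $ 1 $ 1 = a" "mat2 a b c d $ 1 $ 2 = b"
  "mat2 a b c d $ 2 $ 1 = c" "mat2 a b c d $ 2 $ 2 = d"
  by (simp_all add: mat2_def)

lemma mat2_eta: "X = mat2 (X$1$1) (X$1$2) (X$2$1) (X$2$2)"
  by (simp add: vec_eq_iff forall_2)

lemma mat2_eq_iff: "mat2 a b c d = mat2 a' b' c' d' \<longleftrightarrow> a = a' \<and> b = b' \<and> c = c' \<and> d = d'"
  by (auto simp: vec_eq_iff forall_2)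

lemma mat2_mult: "mat2 a b c d ** mat2 e f g h = mat2 (a*e+b*g) (a*f+b*h) (c*e+d*g) (c*f+d*h)"
  by (simp add: vec_eq_iff forall_2 matrix_matrix_mult_def sum_2)

lemma mat_1_eq_mat2: "mat 1 = mat2 1 0 0 1"
  by (simp add: vec_eq_iff forall_2 mat_def)

lemma mat2_scaleR: "c *\<^sub>R mat2 a b d e = mat2 (c *\<^sub>R a) (c *\<^sub>R b) (c *\<^sub>R d) (c *\<^sub>R e)"
  by (simp add: vec_eq_iff forall_2)

lemma mat2_add: "mat2 a b c d + mat2 a' b' c' d' = mat2 (a+a') (b+b') (c+c') (d+d')"
  by (simp add: vec_eq_iff forall_2)

lemma mat2_mult_vec:
  "mat2 a b c d *v x = (\<chi> i. if i = 1 then a * x$1 + b * x$2 else c * x$1 + d * x$2)"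
  by (simp add: vec_eq_iff forall_2 matrix_vector_mult_def sum_2)

lemma norm_vec2: "norm (x :: 'a::real_normed_vector^2) = sqrt ((norm (x$1))\<^sup>2 + (norm (x$2))\<^sup>2)"
  by (simp add: norm_vec_def L2_set_def sum_2)

lemma sums_mat2:
  fixes f1 f2 f3 f4 :: "nat \<Rightarrow> 'a::real_normed_vector"
  assumes "f1 sums a" "f2 sums b" "f3 sums c" "f4 sums d"
  shows "(\<lambda>k. mat2 (f1 k) (f2 k) (f3 k) (f4 k)) sums mat2 a b c d"
proof -
  have "(\<lambda>n. \<Sum>k<n. mat2 (f1 k) (f2 k) (f3 k) (f4 k) $ i $ j) \<longlonglongrightarrow> mat2 a b c d $ i $ j" for i j
    using assms exhaust_2[of i] exhaust_2[of j] unfolding sums_def by auto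
  then show ?thesis unfolding sums_def by (intro vec_tendstoI) simp
qed

section \<open>Similarity and cheaper factorizations of exponentials\<close>

lemma matpow_conj:
  fixes U V B :: "'a::semiring_1^'n^'n"
  assumes "V ** U = mat 1" "U ** V = mat 1"
  shows "matpow (U ** B ** V) k = U ** matpow B k ** V"
proof (induction k)
  case 0 then show ?case using assms by simp
next
  case (Suc k)
  have "U ** B ** V ** (U ** matpow B k ** V) = U ** B ** (V ** U) ** matpow B k ** V"
    by (simp add: matrix_mul_assoc)
  then show ?case using Suc assms by (simp add: matrix_mul_assoc)
qed

lemma sums_exp_series_conj:
  fixes U V B S :: "'a::{real_normed_field,banach,euclidean_space}^'n^'n"
  assumes "(\<lambda>k. (1 / fact k) *\<^sub>R matpow B k) sums S" "V ** U = mat 1" "U ** V = mat 1"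
  shows "(\<lambda>k. (1 / fact k) *\<^sub>R matpow (U ** B ** V) k) sums (U ** S ** V)"
proof -
  have "(B + C) ** V = B ** V + C ** V" for B C :: "'a^'n^'n"
    by (vector matrix_matrix_mult_def sum.distrib[symmetric] field_simps)
  then have "linear (\<lambda>M::'a^'n^'n. U ** M ** V)"
    by (intro linearI) (simp_all add: matrix_add_ldistrib matrix_scalar_ac scalar_matrix_assoc)
  then have "(\<lambda>k. U ** ((1 / fact k) *\<^sub>R matpow B k) ** V) sums (U ** S ** V)"
    by (intro bounded_linear.sums[OF _ assms(1)]) (simp add: linear_conv_bounded_linear)
  then show ?thesis
    using assms(2,3) by (simp add: matpow_conj matrix_scalar_ac scalar_matrix_assoc)
qed

lemma opnorm_conj:
  fixes U V B :: "'a::{real_normed_field,banach,euclidean_space}^'n^'n"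
  assumes "\<And>y. norm (U *v y) = norm y" "\<And>y. norm (V *v y) = norm y" "V ** U = mat 1"
  shows "opnorm (U ** B ** V) = opnorm B"
  unfolding opnorm_def
proof (rule antisym; rule onorm_le)
  fix y
  have "norm ((U ** B ** V) *v y) = norm (B *v (V *v y))"
    by (simp add: matrix_vector_mul_assoc[symmetric] assms(1))
  also have "\<dots> \<le> onorm ((*v) B) * norm (V *v y)" by (rule onorm) simp
  finally show "norm ((U ** B ** V) *v y) \<le> onorm ((*v) B) * norm y" using assms(2) by simp
next
  fix y
  have "B *v y = B *v ((V ** U) *v y)" using assms(3) by simp
  then have "norm (B *v y) = norm ((U ** B ** V) *v (U *v y))"
    by (simp add: matrix_vector_mul_assoc assms(1) flip: matrix_vector_mul_assoc)
  also have "\<dots> \<le> onorm ((*v) (U ** B ** V)) * norm (U *v y)" by (rule onorm) simp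
  finally show "norm (B *v y) \<le> onorm ((*v) (U ** B ** V)) * norm y" using assms(1) by simp
qed

definition mexp_prod :: "('a::{real_normed_field,banach}^'n^'n) list \<Rightarrow> 'a^'n^'n" where
  "mexp_prod Bs = fold (\<lambda>B P. mexp B ** P) Bs (mat 1)"

definition cheaper_exp_factorization :: "'a::{real_normed_field,banach}^'n^'n \<Rightarrow> bool" where
  "cheaper_exp_factorization A \<longleftrightarrow>
     (\<exists>Bs. Bs \<noteq> [] \<and> mexp_prod Bs = mexp A \<and> (\<Sum>B\<leftarrow>Bs. opnorm B) < opnorm A)"

lemma magnus_mexp_less_opnorm:
  assumes "cheaper_exp_factorization A"
  shows "magnus (mexp A) < ereal (opnorm A)"
proof -
  obtain Bs where Bs: "Bs \<noteq> []" "mexp_prod Bs = mexp A" "(\<Sum>B\<leftarrow>Bs. opnorm B) < opnorm A"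
    using assms by (auto simp: cheaper_exp_factorization_def)
  have "magnus (mexp A) \<le> ereal (\<Sum>B\<leftarrow>Bs. opnorm B)"
    unfolding magnus_def by (rule Inf_lower) (use Bs in \<open>auto simp: mexp_prod_def\<close>)
  also have "\<dots> < ereal (opnorm A)" using Bs by simp
  finally show ?thesis .
qed

lemma cheaper_exp_factorization_single:
  assumes "mexp B = mexp A" "opnorm B < opnorm A"
  shows "cheaper_exp_factorization A"
  using assms unfolding cheaper_exp_factorization_def by (intro exI[of _ "[B]"]) (simp add: mexp_prod_def)

lemma cheaper_exp_factorization_pair:
  assumes "mexp B2 ** mexp B1 = mexp A" "opnorm B1 + opnorm B2 < opnorm A"
  shows "cheaper_exp_factorization A"
  using assms unfolding cheaper_exp_factorization_def
  by (intro exI[of _ "[B1, B2]"]) (simp add: mexp_prod_def)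

lemma mexp_prod_conj:
  fixes U V :: "'a::{real_normed_field,banach}^'n^'n"
  assumes "\<And>B. mexp (U ** B ** V) = U ** mexp B ** V" "V ** U = mat 1" "U ** V = mat 1"
  shows "mexp_prod (map (\<lambda>B. U ** B ** V) Bs) = U ** mexp_prod Bs ** V"
proof -
  have "fold (\<lambda>B P. mexp B ** P) (map (\<lambda>B. U ** B ** V) Bs) (U ** P ** V) =
        U ** fold (\<lambda>B P. mexp B ** P) Bs P ** V" for P
  proof (induction Bs arbitrary: P)
    case (Cons B Bs)
    have "mexp (U ** B ** V) ** (U ** P ** V) = U ** (mexp B ** P) ** V"
      using assms(1,2) by (simp add: matrix_mul_assoc) (metis matrix_mul_assoc matrix_mul_rid)
    then show ?case using Cons by simp
  qed simp
  from this[of "mat 1"] show ?thesis using assms(3) by (simp add: mexp_prod_def)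
qed

lemma cheaper_exp_factorization_conj:
  fixes U V T :: "'a::{real_normed_field,banach,euclidean_space}^'n^'n"
  assumes "cheaper_exp_factorization T"
    and "\<And>B. mexp (U ** B ** V) = U ** mexp B ** V" "V ** U = mat 1" "U ** V = mat 1"
    and "\<And>y. norm (U *v y) = norm y" "\<And>y. norm (V *v y) = norm y"
  shows "cheaper_exp_factorization (U ** T ** V)"
proof -
  obtain Bs where Bs: "Bs \<noteq> []" "mexp_prod Bs = mexp T" "(\<Sum>B\<leftarrow>Bs. opnorm B) < opnorm T"
    using assms(1) by (auto simp: cheaper_exp_factorization_def)
  have "mexp_prod (map (\<lambda>B. U ** B ** V) Bs) = mexp (U ** T ** V)"
    using mexp_prod_conj[OF assms(2-4)] Bs(2) assms(2) by simp
  moreover have "(\<Sum>B\<leftarrow>map (\<lambda>B. U ** B ** V) Bs. opnorm B) < opnorm (U ** T ** V)"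
    using Bs(3) by (simp add: o_def opnorm_conj[OF assms(5,6,3)])
  ultimately show ?thesis
    using Bs(1) unfolding cheaper_exp_factorization_def by (intro exI[of _ "map (\<lambda>B. U ** B ** V) Bs"]) simp
qed

section \<open>Upper triangular complex matrices\<close>

lemma matpow_upper_tri_distinct:
  fixes p q r :: complex
  assumes "p \<noteq> r"
  shows "matpow (mat2 p q 0 r) k = mat2 (p^k) (q * (p^k - r^k) / (p - r)) 0 (r^k)"
proof (induction k)
  case (Suc k)
  have "p * (q * (p^k - r^k) / (p - r)) + q * r^k = q * (p * p^k - r * r^k) / (p - r)"
    using assms by (simp add: field_simps)
  then show ?case using Suc by (simp add: mat2_mult)
qed (simp add: mat_1_eq_mat2)

lemma matpow_upper_tri_repeated:
  fixes p q :: complex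
  shows "matpow (mat2 p q 0 p) k = mat2 (p^k) (q * of_nat k * p^(k - 1)) 0 (p^k)"
proof (induction k)
  case (Suc k)
  have "p * (q * of_nat k * p^(k - 1)) + q * p^k = q * (1 + of_nat k) * p^k"
    by (cases k) (simp_all add: algebra_simps)
  then show ?case using Suc by (simp add: mat2_mult)
qed (simp add: mat_1_eq_mat2)

definition exp_divided_diff :: "complex \<Rightarrow> complex \<Rightarrow> complex" where
  "exp_divided_diff p r = (if p = r then exp p else (exp p - exp r) / (p - r))"

lemma exp_series_complex: "(\<lambda>k. (1 / fact k) *\<^sub>R (p::complex)^k) sums exp p"
  using exp_converges[of p] by (simp add: divide_inverse scaleR_conv_of_real)

lemma sums_exp_divided_diff_repeated:
  fixes p q :: complex
  shows "(\<lambda>k. (1 / fact k) *\<^sub>R (q * of_nat k * p^(k - 1))) sums (q * exp p)"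
proof -
  have "(\<lambda>k. q * ((1 / fact k) *\<^sub>R p^k)) sums (q * exp p)"
    by (rule sums_mult[OF exp_series_complex])
  moreover have "(\<lambda>k. q * ((1 / fact k) *\<^sub>R p^k)) =
                 (\<lambda>k. (1 / fact (Suc k)) *\<^sub>R (q * of_nat (Suc k) * p^(Suc k - 1)))"
  proof
    fix k
    have "(of_nat (Suc k) :: complex) / fact (Suc k) = 1 / fact k"
      by (simp add: divide_simps del: of_nat_Suc)
    then show "q * ((1 / fact k) *\<^sub>R p^k) = (1 / fact (Suc k)) *\<^sub>R (q * of_nat (Suc k) * p^(Suc k - 1))"
      by (simp add: scaleR_conv_of_real field_simps del: of_nat_Suc)
  qed
  ultimately show ?thesis
    using sums_Suc_iff[where f = "\<lambda>k. (1 / fact k) *\<^sub>R (q * of_nat k * p^(k - 1))"] by simp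
qed

lemma sums_exp_series_upper_tri:
  fixes p q r :: complex
  shows "(\<lambda>k. (1 / fact k) *\<^sub>R matpow (mat2 p q 0 r) k) sums
           mat2 (exp p) (q * exp_divided_diff p r) 0 (exp r)"
proof (cases "p = r")
  case True
  then show ?thesis
    using sums_mat2[OF exp_series_complex[of p] sums_exp_divided_diff_repeated sums_zero exp_series_complex[of p]]
    by (simp add: matpow_upper_tri_repeated mat2_scaleR exp_divided_diff_def del: scaleR_scaleR)
next
  case False
  have "(\<lambda>k. q / (p - r) * ((1 / fact k) *\<^sub>R p^k - (1 / fact k) *\<^sub>R r^k)) sums
          (q / (p - r) * (exp p - exp r))"
    by (intro sums_mult sums_diff exp_series_complex)
  then have "(\<lambda>k. (1 / fact k) *\<^sub>R (q * (p^k - r^k) / (p - r))) sums (q * (exp p - exp r) / (p - r))"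
    by (simp add: scaleR_conv_of_real field_simps)
  from sums_mat2[OF exp_series_complex[of p] this sums_zero exp_series_complex[of r]] show ?thesis
    using False by (simp add: matpow_upper_tri_distinct mat2_scaleR exp_divided_diff_def del: scaleR_scaleR)
qed

lemma mexp_upper_tri: "mexp (mat2 p q 0 r) = mat2 (exp p) (q * exp_divided_diff p r) 0 (exp r)"
  unfolding mexp_def by (rule sums_unique[OF sums_exp_series_upper_tri, symmetric])

text \<open>\<open>upper_tri_norm P Q R\<close> is the largest singular value of the real matrix
  \<open>[[P, Q], [0, R]]\<close>: its square \<open>s\<^sup>2\<close> is the larger root of \<open>(s\<^sup>2 - P\<^sup>2)(s\<^sup>2 - Q\<^sup>2 - R\<^sup>2) = P\<^sup>2Q\<^sup>2\<close>.\<close>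
definition upper_tri_norm :: "real \<Rightarrow> real \<Rightarrow> real \<Rightarrow> real" where
  "upper_tri_norm P Q R = (sqrt ((P + R)\<^sup>2 + Q\<^sup>2) + sqrt ((P - R)\<^sup>2 + Q\<^sup>2)) / 2"

lemma upper_tri_norm_nonneg: "upper_tri_norm P Q R \<ge> 0"
  by (simp add: upper_tri_norm_def)

lemma upper_tri_norm_char_eq:
  fixes P Q R :: real
  defines "s \<equiv> upper_tri_norm P Q R"
  shows "s\<^sup>2 - P\<^sup>2 \<ge> 0" "s\<^sup>2 - Q\<^sup>2 - R\<^sup>2 \<ge> 0" "(s\<^sup>2 - P\<^sup>2) * (s\<^sup>2 - Q\<^sup>2 - R\<^sup>2) = P\<^sup>2 * Q\<^sup>2"
proof -
  define X Y where "X = sqrt ((P + R)\<^sup>2 + Q\<^sup>2)" and "Y = sqrt ((P - R)\<^sup>2 + Q\<^sup>2)"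
  have X2: "X\<^sup>2 = (P + R)\<^sup>2 + Q\<^sup>2" and Y2: "Y\<^sup>2 = (P - R)\<^sup>2 + Q\<^sup>2" by (simp_all add: X_def Y_def)
  define Z where "Z = X * Y"
  have Z0: "Z \<ge> 0" by (simp add: Z_def X_def Y_def)
  have Z2: "Z\<^sup>2 = ((P + R)\<^sup>2 + Q\<^sup>2) * ((P - R)\<^sup>2 + Q\<^sup>2)" by (simp add: Z_def power_mult_distrib X2 Y2)
  have s_XY: "s = (X + Y) / 2" by (simp add: s_def upper_tri_norm_def X_def Y_def)
  have s2: "s\<^sup>2 = (X\<^sup>2 + Y\<^sup>2 + 2 * Z) / 4"
    unfolding s_XY by (simp add: Z_def power2_eq_square field_simps)
  have sa: "s\<^sup>2 - P\<^sup>2 = (Z + Q\<^sup>2 + R\<^sup>2 - P\<^sup>2) / 2"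
    and sc: "s\<^sup>2 - Q\<^sup>2 - R\<^sup>2 = (Z + P\<^sup>2 - Q\<^sup>2 - R\<^sup>2) / 2"
    using s2 X2 Y2 by (simp_all add: power2_eq_square field_simps)
  have key: "Z\<^sup>2 - (P\<^sup>2 - Q\<^sup>2 - R\<^sup>2)\<^sup>2 = 4 * P\<^sup>2 * Q\<^sup>2"
    unfolding Z2 by (simp add: power2_eq_square algebra_simps)
  then have "(P\<^sup>2 - Q\<^sup>2 - R\<^sup>2)\<^sup>2 \<le> Z\<^sup>2" by (smt (verit) zero_le_power2 mult_nonneg_nonneg)
  then have "\<bar>P\<^sup>2 - Q\<^sup>2 - R\<^sup>2\<bar> \<le> Z" using Z0 by (metis abs_le_square_iff abs_of_nonneg)
  then show "s\<^sup>2 - P\<^sup>2 \<ge> 0" "s\<^sup>2 - Q\<^sup>2 - R\<^sup>2 \<ge> 0" unfolding sa sc by (auto simp: abs_le_iff)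
  show "(s\<^sup>2 - P\<^sup>2) * (s\<^sup>2 - Q\<^sup>2 - R\<^sup>2) = P\<^sup>2 * Q\<^sup>2"
    unfolding sa sc using key by (simp add: power2_eq_square algebra_simps)
qed

lemma upper_tri_norm_quadratic_bound:
  assumes "P \<ge> 0" "Q \<ge> 0"
  shows "(P * x + Q * y)\<^sup>2 + R\<^sup>2 * y\<^sup>2 \<le> (upper_tri_norm P Q R)\<^sup>2 * (x\<^sup>2 + y\<^sup>2)"
proof -
  define s where "s = upper_tri_norm P Q R"
  define a c where "a = s\<^sup>2 - P\<^sup>2" and "c = s\<^sup>2 - Q\<^sup>2 - R\<^sup>2"
  have a0: "a \<ge> 0" and c0: "c \<ge> 0" and ac: "a * c = P\<^sup>2 * Q\<^sup>2"
    using upper_tri_norm_char_eq[of P Q R] by (simp_all add: a_def c_def s_def)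
  have sqrt_ac: "sqrt a * sqrt c = P * Q"
    by (simp add: real_sqrt_mult[symmetric] ac real_sqrt_mult assms)
  have "0 \<le> (sqrt a * x - sqrt c * y)\<^sup>2" by simp
  also have "\<dots> = a * x\<^sup>2 - 2 * (P * Q) * x * y + c * y\<^sup>2"
    using a0 c0 sqrt_ac[symmetric] by (simp add: power2_eq_square algebra_simps)
  also have "\<dots> = s\<^sup>2 * (x\<^sup>2 + y\<^sup>2) - ((P * x + Q * y)\<^sup>2 + R\<^sup>2 * y\<^sup>2)"
    by (simp add: a_def c_def power2_eq_square algebra_simps)
  finally show ?thesis by (simp add: s_def)
qed

lemma opnorm_upper_tri_le: "opnorm (mat2 p q 0 (r::complex)) \<le> upper_tri_norm (cmod p) (cmod q) (cmod r)"
  unfolding opnorm_def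
proof (rule onorm_le)
  fix x :: "complex^2"
  let ?s = "upper_tri_norm (cmod p) (cmod q) (cmod r)"
  have "(norm (mat2 p q 0 r *v x))\<^sup>2 = (cmod (p * x$1 + q * x$2))\<^sup>2 + (cmod (r * x$2))\<^sup>2"
    by (simp add: norm_vec2 mat2_mult_vec)
  also have "\<dots> \<le> (cmod p * cmod (x$1) + cmod q * cmod (x$2))\<^sup>2 + (cmod r)\<^sup>2 * (cmod (x$2))\<^sup>2"
    by (intro add_mono power_mono)
      (auto simp: norm_mult power_mult_distrib intro: order_trans[OF norm_triangle_ineq])
  also have "\<dots> \<le> ?s\<^sup>2 * ((cmod (x$1))\<^sup>2 + (cmod (x$2))\<^sup>2)"
    by (rule upper_tri_norm_quadratic_bound) auto
  also have "\<dots> = (?s * norm x)\<^sup>2" by (simp add: norm_vec2 power_mult_distrib)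
  finally show "norm (mat2 p q 0 r *v x) \<le> ?s * norm x"
    using upper_tri_norm_nonneg by (meson norm_ge_zero power2_le_imp_le mult_nonneg_nonneg)
qed

lemma unit_rotation_to_norm:
  obtains u :: complex where "cmod u = 1" "p * u = of_real (cmod p)"
proof (cases "p = 0")
  case False
  then show ?thesis
    by (intro that[of "cnj p / of_real (cmod p)"])
      (simp_all add: norm_divide complex_norm_square[symmetric] power2_eq_square)
qed (use that[of 1] in simp)

text \<open>The maximizing vector is \<open>(PQ, s\<^sup>2 - P\<^sup>2)\<close>, rotated to the phases of \<open>p\<close> and \<open>q\<close>.\<close>
lemma opnorm_upper_tri_ge:
  assumes "q \<noteq> 0"
  shows "upper_tri_norm (cmod p) (cmod q) (cmod r) \<le> opnorm (mat2 p q 0 (r::complex))"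
proof -
  define P Q R where "P = cmod p" and "Q = cmod q" and "R = cmod r"
  define s where "s = upper_tri_norm P Q R"
  define a c where "a = s\<^sup>2 - P\<^sup>2" and "c = s\<^sup>2 - Q\<^sup>2 - R\<^sup>2"
  have pos: "P \<ge> 0" "Q > 0" "R \<ge> 0" using assms by (simp_all add: P_def Q_def R_def)
  have a0: "a \<ge> 0" and c0: "c \<ge> 0" and ac: "a * c = P\<^sup>2 * Q\<^sup>2"
    using upper_tri_norm_char_eq[of P Q R] by (simp_all add: a_def c_def s_def)
  obtain u1 where u1: "cmod u1 = 1" "p * u1 = of_real P" using unit_rotation_to_norm P_def by metis
  obtain u2 where u2: "cmod u2 = 1" "q * u2 = of_real Q" using unit_rotation_to_norm Q_def by metis
  define x :: "complex^2" where "x = (\<chi> i. if i = 1 then of_real (P * Q) * u1 else of_real a * u2)"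
  have nx: "(norm x)\<^sup>2 = (P * Q)\<^sup>2 + a\<^sup>2"
    using a0 pos by (simp add: norm_vec2 x_def norm_mult u1 u2)
  have Ax1: "(mat2 p q 0 r *v x)$1 = of_real (P * (P * Q) + Q * a)"
    by (simp add: mat2_mult_vec x_def algebra_simps u1(2)[symmetric] u2(2)[symmetric])
  have "cmod ((mat2 p q 0 r *v x)$1) = P * (P * Q) + Q * a"
    unfolding Ax1 norm_of_real using pos a0 by simp
  moreover have "cmod ((mat2 p q 0 r *v x)$2) = R * a"
    using a0 by (simp add: mat2_mult_vec x_def norm_mult u2 R_def)
  ultimately have "(norm (mat2 p q 0 r *v x))\<^sup>2 = (P * (P * Q) + Q * a)\<^sup>2 + (R * a)\<^sup>2"
    by (simp add: norm_vec2)
  also have "\<dots> = s\<^sup>2 * ((P * Q)\<^sup>2 + a\<^sup>2)"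
  proof -
    have "c = s\<^sup>2 - Q\<^sup>2 - R\<^sup>2" "a = s\<^sup>2 - P\<^sup>2" by (simp_all add: a_def c_def)
    then show ?thesis using ac by algebra
  qed
  finally have "(norm (mat2 p q 0 r *v x))\<^sup>2 = (s * norm x)\<^sup>2"
    by (simp add: nx power_mult_distrib)
  then have eq: "norm (mat2 p q 0 r *v x) = s * norm x"
    using upper_tri_norm_nonneg by (metis norm_ge_zero power2_eq_iff_nonneg mult_nonneg_nonneg s_def)
  have "x \<noteq> 0"
  proof
    assume "x = 0"
    then have "(P * Q)\<^sup>2 + a\<^sup>2 = 0" using nx by simp
    then have "P * Q = 0" "a = 0" by (simp_all add: )
    then have "c = - Q\<^sup>2 - R\<^sup>2" using pos by (simp add: a_def c_def)
    moreover have "Q\<^sup>2 > 0" "R\<^sup>2 \<ge> 0" using pos by simp_all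
    ultimately show False using c0 by linarith
  qed
  moreover have "norm (mat2 p q 0 r *v x) \<le> opnorm (mat2 p q 0 r) * norm x"
    unfolding opnorm_def by (rule onorm) simp
  ultimately show ?thesis using eq by (simp add: s_def P_def Q_def R_def)
qed

lemma upper_tri_norm_scale:
  assumes "c \<ge> 0"
  shows "upper_tri_norm (c * P) (c * Q) (c * R) = c * upper_tri_norm P Q R"
proof -
  have "(c * P + c * R)\<^sup>2 + (c * Q)\<^sup>2 = c\<^sup>2 * ((P + R)\<^sup>2 + Q\<^sup>2)"
       "(c * P - c * R)\<^sup>2 + (c * Q)\<^sup>2 = c\<^sup>2 * ((P - R)\<^sup>2 + Q\<^sup>2)"
    by (simp_all add: power2_eq_square algebra_simps)
  then have "sqrt ((c * P + c * R)\<^sup>2 + (c * Q)\<^sup>2) = c * sqrt ((P + R)\<^sup>2 + Q\<^sup>2)"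
            "sqrt ((c * P - c * R)\<^sup>2 + (c * Q)\<^sup>2) = c * sqrt ((P - R)\<^sup>2 + Q\<^sup>2)"
    using assms by (simp_all add: real_sqrt_mult)
  then show ?thesis unfolding upper_tri_norm_def by (simp add: algebra_simps add_divide_distrib)
qed

lemma upper_tri_norm_strict_mono:
  assumes "Q1\<^sup>2 < Q2\<^sup>2"
  shows "upper_tri_norm P Q1 R < upper_tri_norm P Q2 R"
  using assms unfolding upper_tri_norm_def by (intro divide_strict_right_mono add_strict_mono) auto

lemma sqrt_le_tangent:
  assumes "S > 0" "v \<ge> 0"
  shows "sqrt v \<le> (S\<^sup>2 + v) / (2 * S)"
proof -
  have "0 \<le> (sqrt v - S)\<^sup>2" by simp
  then show ?thesis using assms by (simp add: power2_eq_square field_simps)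
qed

lemma sqrt_sum_strict_concave:
  assumes "K \<ge> 0" "Q > 0" "x\<^sup>2 + y\<^sup>2 < 2 * Q\<^sup>2"
  shows "sqrt (K + x\<^sup>2) + sqrt (K + y\<^sup>2) < 2 * sqrt (K + Q\<^sup>2)"
proof -
  define S where "S = sqrt (K + Q\<^sup>2)"
  have S0: "S > 0" using assms by (simp add: S_def add_nonneg_pos)
  have S2: "S\<^sup>2 = K + Q\<^sup>2" using assms by (simp add: S_def)
  have "sqrt (K + x\<^sup>2) + sqrt (K + y\<^sup>2) \<le> (S\<^sup>2 + (K + x\<^sup>2)) / (2 * S) + (S\<^sup>2 + (K + y\<^sup>2)) / (2 * S)"
    using assms S0 by (intro add_mono sqrt_le_tangent) auto
  also have "\<dots> = (4 * K + 2 * Q\<^sup>2 + x\<^sup>2 + y\<^sup>2) / (2 * S)"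
    by (simp add: S2 add_divide_distrib[symmetric])
  also have "\<dots> < (4 * K + 4 * Q\<^sup>2) / (2 * S)"
    using assms S0 by (intro divide_strict_right_mono) auto
  also have "\<dots> = 2 * S" using S2 S0 by (simp add: field_simps power2_eq_square)
  finally show ?thesis by (simp add: S_def)
qed

lemma upper_tri_norm_strict_concave:
  assumes "Q > 0" "x\<^sup>2 + y\<^sup>2 < 2 * Q\<^sup>2"
  shows "upper_tri_norm P x R + upper_tri_norm P y R < 2 * upper_tri_norm P Q R"
  using sqrt_sum_strict_concave[OF _ assms, of "(P + R)\<^sup>2"] sqrt_sum_strict_concave[OF _ assms, of "(P - R)\<^sup>2"]
  unfolding upper_tri_norm_def by (simp add: field_simps)

section \<open>Cheaper factorizations of upper triangular matrices\<close>

text \<open>\<open>(Q, Q)\<close> is a solution, but unless \<open>u = v\<close> it is not orthogonal to the kernel direction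
  \<open>(v, -u)\<close>; removing that component gives a strictly shorter solution.\<close>
lemma exists_smaller_solution:
  fixes u v Q :: complex
  assumes "u \<noteq> v" "Q \<noteq> 0"
  obtains q1 q2 where "u * q1 + v * q2 = (u + v) * Q" "(cmod q1)\<^sup>2 + (cmod q2)\<^sup>2 < 2 * (cmod Q)\<^sup>2"
proof -
  define N where "N = (cmod u)\<^sup>2 + (cmod v)\<^sup>2"
  define t where "t = 1 / N"
  define D where "D = v - u"
  define z where "z = - (of_real t * Q * cnj D)"
  define q1 q2 where "q1 = Q + v * z" and "q2 = Q - u * z"
  have "u \<noteq> 0 \<or> v \<noteq> 0" using assms(1) by auto
  then have "N > 0" by (auto simp: N_def intro: add_pos_nonneg add_nonneg_pos)
  then have t0: "t > 0" and "t * N = 1" by (simp_all add: t_def)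
  then have ht: "of_real t * (v * cnj v + u * cnj u) = 1"
    unfolding N_def by (metis complex_norm_square of_real_1 of_real_add of_real_mult add.commute)
  have "q1 * cnj q1 + q2 * cnj q2 =
        2 * (Q * cnj Q) + of_real t * (Q * cnj Q) * (D * cnj D) * (of_real t * (v * cnj v + u * cnj u))
        - 2 * of_real t * (Q * cnj Q) * (D * cnj D)"
    by (simp add: q1_def q2_def z_def D_def algebra_simps)
  also have "\<dots> = of_real (2 * (cmod Q)\<^sup>2 - t * (cmod Q)\<^sup>2 * (cmod D)\<^sup>2)"
    unfolding ht of_real_diff of_real_mult complex_norm_square of_real_numeral by (simp add: algebra_simps)
  finally have "complex_of_real ((cmod q1)\<^sup>2 + (cmod q2)\<^sup>2) =
                of_real (2 * (cmod Q)\<^sup>2 - t * (cmod Q)\<^sup>2 * (cmod D)\<^sup>2)"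
    by (simp only: of_real_add complex_norm_square)
  then have "(cmod q1)\<^sup>2 + (cmod q2)\<^sup>2 = 2 * (cmod Q)\<^sup>2 - t * (cmod Q)\<^sup>2 * (cmod D)\<^sup>2"
    by (simp only: of_real_eq_iff)
  moreover have "t * (cmod Q)\<^sup>2 * (cmod D)\<^sup>2 > 0" using t0 assms by (simp add: D_def)
  moreover have "u * q1 + v * q2 = (u + v) * Q" by (simp add: q1_def q2_def algebra_simps)
  ultimately show ?thesis using that by simp
qed

lemma mexp_upper_tri_halves:
  fixes a b d q1 q2 :: complex
  assumes "a \<noteq> d" and lin: "exp (a/2) * q1 + exp (d/2) * q2 = (exp (a/2) + exp (d/2)) * (b/2)"
  shows "mexp (mat2 (a/2) q2 0 (d/2)) ** mexp (mat2 (a/2) q1 0 (d/2)) = mexp (mat2 a b 0 d)"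
proof -
  define u v where "u = exp (a/2)" and "v = exp (d/2)"
  define f where "f = (u - v) / (a/2 - d/2)"
  have uv: "exp a = u * u" "exp d = v * v" by (simp_all add: u_def v_def flip: exp_add)
  have ed: "exp_divided_diff (a/2) (d/2) = f" "exp_divided_diff a d = (u * u - v * v) / (a - d)"
    using assms(1) by (simp_all add: exp_divided_diff_def f_def u_def v_def flip: exp_add)
  have "u * (q1 * f) + q2 * f * v = f * (u * q1 + v * q2)" by (simp add: algebra_simps)
  also have "\<dots> = f * ((u + v) * (b/2))" using lin by (simp add: u_def v_def)
  also have "\<dots> = b * (u * u - v * v) / (a - d)"
    using assms(1) by (simp add: f_def field_simps)
  finally have top: "u * (q1 * f) + q2 * f * v = b * (u * u - v * v) / (a - d)" .
  show ?thesis
    by (simp add: mexp_upper_tri ed uv mat2_mult top u_def[symmetric] v_def[symmetric])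
qed

lemma cheaper_exp_factorization_upper_tri_distinct_halves:
  fixes a b d :: complex
  assumes b: "b \<noteq> 0" and ad: "exp (a/2) \<noteq> exp (d/2)"
  shows "cheaper_exp_factorization (mat2 a b 0 d)"
proof -
  obtain q1 q2 where lin: "exp (a/2) * q1 + exp (d/2) * q2 = (exp (a/2) + exp (d/2)) * (b/2)"
    and small: "(cmod q1)\<^sup>2 + (cmod q2)\<^sup>2 < 2 * (cmod (b/2))\<^sup>2"
    using exists_smaller_solution[OF ad, of "b/2"] b by auto
  have "opnorm (mat2 (a/2) q1 0 (d/2)) + opnorm (mat2 (a/2) q2 0 (d/2))
        \<le> upper_tri_norm (cmod (a/2)) (cmod q1) (cmod (d/2)) + upper_tri_norm (cmod (a/2)) (cmod q2) (cmod (d/2))"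
    by (intro add_mono opnorm_upper_tri_le)
  also have "\<dots> < 2 * upper_tri_norm (cmod (a/2)) (cmod (b/2)) (cmod (d/2))"
    using b small by (intro upper_tri_norm_strict_concave) auto
  also have "\<dots> = upper_tri_norm (cmod a) (cmod b) (cmod d)"
    using upper_tri_norm_scale[of 2 "cmod (a/2)" "cmod (b/2)" "cmod (d/2)"] by (simp add: norm_divide)
  also have "\<dots> \<le> opnorm (mat2 a b 0 d)" by (rule opnorm_upper_tri_ge[OF b])
  finally show ?thesis
    using ad by (intro cheaper_exp_factorization_pair[OF mexp_upper_tri_halves[OF _ lin]]) auto
qed

text \<open>If \<open>exp(a/2) = exp(d/2)\<close> but \<open>a \<noteq> d\<close>, the off-diagonal entry of \<open>exp T\<close> vanishes,
  so dropping it from \<open>T\<close> does not change the exponential.\<close>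
lemma cheaper_exp_factorization_upper_tri_equal_halves:
  fixes a b d :: complex
  assumes b: "b \<noteq> 0" and "a \<noteq> d" "exp (a/2) = exp (d/2)"
  shows "cheaper_exp_factorization (mat2 a b 0 d)"
proof (rule cheaper_exp_factorization_single)
  have "exp a = exp (a/2) * exp (a/2)" "exp d = exp (d/2) * exp (d/2)" by (simp_all flip: exp_add)
  then have "exp a = exp d" using assms(3) by simp
  then show "mexp (mat2 a 0 0 d) = mexp (mat2 a b 0 d)"
    using assms(2) by (simp add: mexp_upper_tri exp_divided_diff_def)
  have "opnorm (mat2 a 0 0 d) \<le> upper_tri_norm (cmod a) 0 (cmod d)"
    using opnorm_upper_tri_le[of a 0 d] by simp
  also have "\<dots> < upper_tri_norm (cmod a) (cmod b) (cmod d)"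
    using b by (intro upper_tri_norm_strict_mono) simp
  also have "\<dots> \<le> opnorm (mat2 a b 0 d)" by (rule opnorm_upper_tri_ge[OF b])
  finally show "opnorm (mat2 a 0 0 d) < opnorm (mat2 a b 0 d)" .
qed

lemma upper_tri_norm_swap: "upper_tri_norm P Q R = upper_tri_norm R Q P"
  by (simp add: upper_tri_norm_def power2_commute add.commute)

lemma upper_tri_norm_split_less:
  assumes "(P + R)\<^sup>2 \<le> A\<^sup>2 + 4 * x\<^sup>2" "(P - R)\<^sup>2 \<le> 4 * x\<^sup>2" "4 * x\<^sup>2 + Q\<^sup>2 < B\<^sup>2 / 4" "B \<ge> 0"
  shows "2 * upper_tri_norm P Q R < upper_tri_norm A B A"
proof -
  have "2 * upper_tri_norm P Q R = sqrt ((P + R)\<^sup>2 + Q\<^sup>2) + sqrt ((P - R)\<^sup>2 + Q\<^sup>2)"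
    by (simp add: upper_tri_norm_def)
  also have "\<dots> < sqrt (A\<^sup>2 + B\<^sup>2 / 4) + sqrt ((B / 2)\<^sup>2)"
  proof -
    have "(P + R)\<^sup>2 + Q\<^sup>2 < A\<^sup>2 + B\<^sup>2 / 4" using assms(1,3) by linarith
    moreover have "(P - R)\<^sup>2 + Q\<^sup>2 < (B / 2)\<^sup>2" using assms(2,3) by (simp add: power_divide)
    ultimately show ?thesis by (rule add_strict_mono[OF real_sqrt_less_mono real_sqrt_less_mono])
  qed
  also have "\<dots> = upper_tri_norm A B A"
  proof -
    have eq: "(A + A)\<^sup>2 + B\<^sup>2 = 2\<^sup>2 * (A\<^sup>2 + B\<^sup>2 / 4)" by (simp add: power2_eq_square field_simps)
    have "sqrt ((A + A)\<^sup>2 + B\<^sup>2) = 2 * sqrt (A\<^sup>2 + B\<^sup>2 / 4)" unfolding eq real_sqrt_mult by simp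
    then show ?thesis using assms(4) by (simp add: upper_tri_norm_def)
  qed
  finally show ?thesis .
qed

lemma split_parameter_estimate:
  fixes y B :: real
  assumes "0 < y" "y \<le> 1" "18 * y \<le> B\<^sup>2"
  shows "y\<^sup>2 + B\<^sup>2 / (2 + y)\<^sup>2 < B\<^sup>2 / 4"
proof -
  have "(9 - 4 * y) * (2 + y)\<^sup>2 - 36 = y * (20 - 7 * y - 4 * y\<^sup>2)"
    by (simp add: power2_eq_square algebra_simps)
  moreover have "y\<^sup>2 \<le> 1" using assms by (simp add: power_le_one)
  then have "y * (20 - 7 * y - 4 * y\<^sup>2) \<ge> 0" using assms by (intro mult_nonneg_nonneg) auto
  ultimately have "36 \<le> (9 - 4 * y) * (2 + y)\<^sup>2" by linarith
  then have "1 / (2 + y)\<^sup>2 \<le> (9 - 4 * y) / 36" using assms by (simp add: divide_simps)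
  then have "B\<^sup>2 * (1 / (2 + y)\<^sup>2) \<le> B\<^sup>2 * ((9 - 4 * y) / 36)" by (rule mult_left_mono) simp
  then have "B\<^sup>2 / (2 + y)\<^sup>2 \<le> B\<^sup>2 / 4 - B\<^sup>2 * y / 9" by (simp add: field_simps)
  moreover have "2 * y\<^sup>2 \<le> B\<^sup>2 * y / 9"
    using assms by (simp add: power2_eq_square field_simps mult_right_mono)
  moreover have "y\<^sup>2 > 0" using assms by simp
  ultimately show ?thesis by linarith
qed

lemma exists_split_parameter:
  fixes B :: real
  assumes "B > 0"
  obtains x where "x > 0" "4 * x\<^sup>2 + (B * (x / (exp (2 * x) - 1)))\<^sup>2 < B\<^sup>2 / 4"
proof -
  define y where "y = min 1 (B\<^sup>2 / 18)"
  have y: "0 < y" "y \<le> 1" "18 * y \<le> B\<^sup>2" using assms by (auto simp: y_def)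
  have "y * (2 + y) / 2 = y + y\<^sup>2 / 2" by (simp add: power2_eq_square field_simps)
  moreover have "y + y\<^sup>2 / 2 \<le> exp y - 1" using exp_lower_Taylor_quadratic[of y] y by simp
  ultimately have ey: "y * (2 + y) / 2 \<le> exp y - 1" by simp
  have pos: "y * (2 + y) / 2 > 0" using y by simp
  have "(y / 2) / (exp y - 1) \<le> (y / 2) / (y * (2 + y) / 2)"
    using ey pos y by (intro divide_left_mono) auto
  also have "\<dots> = 1 / (2 + y)" using y by simp
  finally have "B * ((y / 2) / (exp y - 1)) \<le> B * (1 / (2 + y))"
    using assms by (intro mult_left_mono) simp_all
  moreover have "0 \<le> B * ((y / 2) / (exp y - 1))" using ey pos assms y by simp
  ultimately have "(B * ((y / 2) / (exp y - 1)))\<^sup>2 \<le> (B * (1 / (2 + y)))\<^sup>2"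
    by (simp add: power_mono)
  also have "\<dots> = B\<^sup>2 / (2 + y)\<^sup>2" by (simp add: power_divide)
  finally have "y\<^sup>2 + (B * ((y / 2) / (exp y - 1)))\<^sup>2 < B\<^sup>2 / 4"
    using split_parameter_estimate[OF y] by linarith
  moreover have "4 * (y / 2)\<^sup>2 = y\<^sup>2" "2 * (y / 2) = y" by (simp_all add: power2_eq_square)
  ultimately show ?thesis using that[of "y / 2"] y by simp
qed

lemma mexp_upper_tri_split_product:
  fixes a b :: complex and x :: real
  assumes "x \<noteq> 0"
  defines "q \<equiv> b * of_real (x / (exp (2 * x) - 1))"
  shows "mexp (mat2 (a/2 + of_real x) q 0 (a/2 - of_real x)) **
         mexp (mat2 (a/2 - of_real x) q 0 (a/2 + of_real x)) = mexp (mat2 a b 0 a)"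
proof -
  define y where "y = complex_of_real x"
  define F1 F2 where "F1 = exp (a/2 + y)" and "F2 = exp (a/2 - y)"
  define \<beta> where "\<beta> = q * (F1 - F2) / (2 * y)"
  have y0: "y \<noteq> 0" using assms(1) by (simp add: y_def)
  have "exp (2 * y) = of_real (exp (2 * x))" by (simp add: y_def flip: exp_of_real)
  then have E0: "exp (2 * y) \<noteq> 1" using assms(1) by simp
  have q: "q = b * y / (exp (2 * y) - 1)"
    by (simp add: q_def y_def flip: exp_of_real)
  have ed: "q * exp_divided_diff (a/2 + y) (a/2 - y) = \<beta>" "q * exp_divided_diff (a/2 - y) (a/2 + y) = \<beta>"
    using y0 by (simp_all add: exp_divided_diff_def \<beta>_def F1_def F2_def field_simps)
  have F12: "F1 * F2 = exp a" "F2 * F1 = exp a" by (simp_all add: F1_def F2_def flip: exp_add)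
  have "F1 * F1 = exp a * exp (2 * y)" by (simp add: F1_def flip: exp_add)
  then have FF: "F1 * (F1 - F2) = exp a * (exp (2 * y) - 1)" using F12 by (simp add: algebra_simps)
  have "F1 * \<beta> + \<beta> * F1 = q * (F1 * (F1 - F2)) / y" using y0 by (simp add: \<beta>_def field_simps)
  also have "\<dots> = b * exp a" using y0 E0 by (simp add: FF q)
  finally have top: "F1 * \<beta> + \<beta> * F1 = b * exp a" .
  have "exp_divided_diff a a = exp a" by (simp add: exp_divided_diff_def)
  then show ?thesis
    by (simp add: mexp_upper_tri ed F1_def[symmetric] F2_def[symmetric] mat2_mult F12 top y_def[symmetric])
qed

lemma parallelogram_law:
  fixes x y :: "'a::real_inner"
  shows "(norm (x + y))\<^sup>2 + (norm (x - y))\<^sup>2 = 2 * (norm x)\<^sup>2 + 2 * (norm y)\<^sup>2"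
  by (simp add: power2_norm_eq_inner inner_add_left inner_add_right inner_diff_left inner_diff_right
      inner_commute)

lemma norm_split_diagonal_bounds:
  fixes a :: complex and x :: real
  defines "P \<equiv> cmod (a/2 + of_real x)" and "R \<equiv> cmod (a/2 - of_real x)"
  shows "(P + R)\<^sup>2 \<le> (cmod a)\<^sup>2 + 4 * x\<^sup>2" "(P - R)\<^sup>2 \<le> 4 * x\<^sup>2"
proof -
  have "P\<^sup>2 + R\<^sup>2 = 2 * (cmod (a/2))\<^sup>2 + 2 * (cmod (complex_of_real x))\<^sup>2"
    unfolding P_def R_def by (rule parallelogram_law)
  also have "\<dots> = (cmod a)\<^sup>2 / 2 + 2 * x\<^sup>2" by (simp add: norm_divide power_divide)
  finally have "P\<^sup>2 + R\<^sup>2 = (cmod a)\<^sup>2 / 2 + 2 * x\<^sup>2" .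
  moreover have "(P + R)\<^sup>2 \<le> 2 * (P\<^sup>2 + R\<^sup>2)"
    using zero_le_power2[of "P - R"] by (simp add: power2_eq_square algebra_simps)
  ultimately show "(P + R)\<^sup>2 \<le> (cmod a)\<^sup>2 + 4 * x\<^sup>2" by simp
  have "\<bar>P - R\<bar> \<le> cmod ((a/2 + of_real x) - (a/2 - of_real x))"
    unfolding P_def R_def by (rule norm_triangle_ineq3)
  also have "\<dots> = \<bar>2 * x\<bar>" by simp
  finally have "(P - R)\<^sup>2 \<le> (2 * x)\<^sup>2" by (simp only: abs_le_square_iff)
  then show "(P - R)\<^sup>2 \<le> 4 * x\<^sup>2" by (simp add: power_mult_distrib)
qed

lemma cheaper_exp_factorization_upper_tri_repeated:
  fixes a b :: complex
  assumes b: "b \<noteq> 0"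
  shows "cheaper_exp_factorization (mat2 a b 0 a)"
proof -
  define B where "B = cmod b"
  have B0: "B > 0" using b by (simp add: B_def)
  obtain x where x: "x > 0" and small: "4 * x\<^sup>2 + (B * (x / (exp (2 * x) - 1)))\<^sup>2 < B\<^sup>2 / 4"
    using exists_split_parameter[OF B0] by blast
  define k where "k = x / (exp (2 * x) - 1)"
  define q where "q = b * of_real k"
  define P R where "P = cmod (a/2 + of_real x)" and "R = cmod (a/2 - of_real x)"
  note PR = norm_split_diagonal_bounds[of a x, folded P_def R_def]
  have "exp (2 * x) > 1" using x by simp
  then have "k > 0" using x by (simp add: k_def)
  then have cq: "cmod q = B * k" by (simp add: q_def B_def norm_mult)
  have "opnorm (mat2 (a/2 - of_real x) q 0 (a/2 + of_real x)) \<le> upper_tri_norm R (cmod q) P"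
    unfolding P_def R_def by (rule opnorm_upper_tri_le)
  moreover have "opnorm (mat2 (a/2 + of_real x) q 0 (a/2 - of_real x)) \<le> upper_tri_norm P (cmod q) R"
    unfolding P_def R_def by (rule opnorm_upper_tri_le)
  ultimately have "opnorm (mat2 (a/2 - of_real x) q 0 (a/2 + of_real x)) +
                   opnorm (mat2 (a/2 + of_real x) q 0 (a/2 - of_real x)) \<le> 2 * upper_tri_norm P (B * k) R"
    unfolding cq upper_tri_norm_swap[of R] by simp
  also have "\<dots> < upper_tri_norm (cmod a) B (cmod a)"
    using PR small B0 by (intro upper_tri_norm_split_less) (simp_all add: k_def)
  also have "\<dots> \<le> opnorm (mat2 a b 0 a)" using opnorm_upper_tri_ge[OF b, of a a] by (simp add: B_def)
  finally have cost: "opnorm (mat2 (a/2 - of_real x) q 0 (a/2 + of_real x)) +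
                   opnorm (mat2 (a/2 + of_real x) q 0 (a/2 - of_real x)) < opnorm (mat2 a b 0 a)" .
  have "mexp (mat2 (a/2 + of_real x) q 0 (a/2 - of_real x)) **
        mexp (mat2 (a/2 - of_real x) q 0 (a/2 + of_real x)) = mexp (mat2 a b 0 a)"
    unfolding q_def k_def using x by (intro mexp_upper_tri_split_product) simp
  then show ?thesis using cost by (rule cheaper_exp_factorization_pair)
qed

lemma cheaper_exp_factorization_upper_tri:
  fixes a b d :: complex
  assumes "b \<noteq> 0"
  shows "cheaper_exp_factorization (mat2 a b 0 d)"
proof (cases "a = d")
  case True
  then show ?thesis using cheaper_exp_factorization_upper_tri_repeated[OF assms] by simp
next
  case False
  then show ?thesis
    using cheaper_exp_factorization_upper_tri_distinct_halves[OF assms]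
      cheaper_exp_factorization_upper_tri_equal_halves[OF assms]
    by blast
qed

section \<open>The complex case\<close>

lemma ctranspose_mat2: "ctranspose (mat2 a b c d) = mat2 (cnj a) (cnj c) (cnj b) (cnj d)"
  by (simp add: ctranspose_def vec_eq_iff forall_2)

lemma ctranspose_matrix_mult: "ctranspose (X ** Y) = ctranspose Y ** ctranspose (X :: complex^'n^'m)"
  by (simp add: ctranspose_def matrix_matrix_mult_def vec_eq_iff mult.commute)

definition unitary2 :: "complex \<Rightarrow> complex \<Rightarrow> complex^2^2" where
  "unitary2 a b = mat2 a (- cnj b) b (cnj a)"

lemma ctranspose_unitary2: "ctranspose (unitary2 a b) = unitary2 (cnj a) (- b)"
  by (simp add: unitary2_def ctranspose_mat2)

lemma unitary2_inverse:
  assumes "a * cnj a + b * cnj b = 1"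
  shows "ctranspose (unitary2 a b) ** unitary2 a b = mat 1" "unitary2 a b ** ctranspose (unitary2 a b) = mat 1"
  unfolding ctranspose_unitary2
  using assms by (simp_all add: unitary2_def mat2_mult mat_1_eq_mat2 mat2_eq_iff algebra_simps)

lemma norm_unitary2_mult_vec:
  assumes "a * cnj a + b * cnj b = 1"
  shows "norm (unitary2 a b *v y) = norm y"
proof -
  have "complex_of_real ((cmod (a * y$1 - cnj b * y$2))\<^sup>2 + (cmod (b * y$1 + cnj a * y$2))\<^sup>2)
        = (a * cnj a + b * cnj b) * complex_of_real ((cmod (y$1))\<^sup>2 + (cmod (y$2))\<^sup>2)"
    unfolding of_real_add complex_norm_square by (simp add: algebra_simps)
  then have "(cmod (a * y$1 - cnj b * y$2))\<^sup>2 + (cmod (b * y$1 + cnj a * y$2))\<^sup>2 = (cmod (y$1))\<^sup>2 + (cmod (y$2))\<^sup>2"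
    using assms by (simp only: mult_1 of_real_eq_iff)
  then show ?thesis by (simp add: norm_vec2 unitary2_def mat2_mult_vec)
qed

lemma norm_ctranspose_unitary2_mult_vec:
  assumes "a * cnj a + b * cnj b = 1"
  shows "norm (ctranspose (unitary2 a b) *v y) = norm y"
  unfolding ctranspose_unitary2 using assms by (intro norm_unitary2_mult_vec) (simp add: mult.commute)

lemma exists_eigenvector2:
  fixes p q r s :: complex
  obtains v1 v2 l where "p * v1 + q * v2 = l * v1" "r * v1 + s * v2 = l * v2" "v1 \<noteq> 0 \<or> v2 \<noteq> 0"
proof (cases "q = 0")
  case True
  then show ?thesis using that[of 0 1 s] by simp
next
  case False
  define c where "c = csqrt ((p + s)\<^sup>2 - 4 * (p * s - q * r))"
  define l where "l = (p + s + c) / 2"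
  have "l\<^sup>2 - (p + s) * l + (p * s - q * r) = (c\<^sup>2 - ((p + s)\<^sup>2 - 4 * (p * s - q * r))) / 4"
    by (simp add: l_def power2_eq_square field_simps)
  then have "l\<^sup>2 - (p + s) * l + (p * s - q * r) = 0" by (simp add: c_def)
  then show ?thesis
    using False by (intro that[of q "l - p" l]) (simp_all add: power2_eq_square algebra_simps)
qed

lemma exists_unit_eigenvector2:
  fixes p q r s :: complex
  obtains a b l where "a * cnj a + b * cnj b = 1" "p * a + q * b = l * a" "r * a + s * b = l * b"
proof -
  obtain v1 v2 l where v: "p * v1 + q * v2 = l * v1" "r * v1 + s * v2 = l * v2" "v1 \<noteq> 0 \<or> v2 \<noteq> 0"
    by (rule exists_eigenvector2)
  define n where "n = sqrt ((cmod v1)\<^sup>2 + (cmod v2)\<^sup>2)"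
  have n0: "n > 0" using v(3) by (auto simp: n_def add_pos_nonneg add_nonneg_pos)
  have nn: "complex_of_real n * complex_of_real n = v1 * cnj v1 + v2 * cnj v2"
  proof -
    have "n * n = (cmod v1)\<^sup>2 + (cmod v2)\<^sup>2" using n0 by (simp add: n_def)
    then show ?thesis by (metis of_real_mult of_real_add complex_norm_square)
  qed
  show ?thesis
  proof (rule that[of "v1 / of_real n" "v2 / of_real n" l])
    have "v1 / of_real n * cnj (v1 / of_real n) + v2 / of_real n * cnj (v2 / of_real n)
          = (v1 * cnj v1 + v2 * cnj v2) / (complex_of_real n * complex_of_real n)"
      by (simp add: times_divide_times_eq add_divide_distrib)
    also have "\<dots> = 1" unfolding nn[symmetric] using n0 by simp
    finally show "v1 / of_real n * cnj (v1 / of_real n) + v2 / of_real n * cnj (v2 / of_real n) = 1" .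
  qed (use v n0 in \<open>simp_all add: field_simps\<close>)
qed

text \<open>Schur triangularization: the first column of the unitary is a unit eigenvector.\<close>
lemma schur_decomposition2:
  fixes A :: "complex^2^2"
  obtains a b p q r where "a * cnj a + b * cnj b = 1"
    "A = unitary2 a b ** mat2 p q 0 r ** ctranspose (unitary2 a b)"
proof -
  obtain a b l where ab: "a * cnj a + b * cnj b = 1"
    and eig: "A$1$1 * a + A$1$2 * b = l * a" "A$2$1 * a + A$2$2 * b = l * b"
    by (rule exists_unit_eigenvector2)
  define T where "T = ctranspose (unitary2 a b) ** A ** unitary2 a b"
  have "T $ 2 $ 1 = a * (A$2$1 * a + A$2$2 * b) - b * (A$1$1 * a + A$1$2 * b)"
    unfolding T_def ctranspose_unitary2
    by (subst mat2_eta[of A]) (simp add: unitary2_def mat2_mult algebra_simps)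
  also have "\<dots> = 0" using eig by (simp add: algebra_simps)
  finally have "T = mat2 (T$1$1) (T$1$2) 0 (T$2$2)" by (subst mat2_eta) simp
  moreover have "unitary2 a b ** T ** ctranspose (unitary2 a b) =
    (unitary2 a b ** ctranspose (unitary2 a b)) ** A ** (unitary2 a b ** ctranspose (unitary2 a b))"
    by (simp add: T_def matrix_mul_assoc)
  then have "A = unitary2 a b ** T ** ctranspose (unitary2 a b)"
    using unitary2_inverse(2)[OF ab] by simp
  ultimately show ?thesis using that ab by metis
qed

text \<open>The exponential series is summed explicitly for triangular matrices; Schur transports
  convergence to all complex \<open>2 \<times> 2\<close> matrices.\<close>
lemma sums_exp_series_complex2:
  fixes B :: "complex^2^2"
  shows "(\<lambda>k. (1 / fact k) *\<^sub>R matpow B k) sums mexp B"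
proof -
  obtain a b p q r where ab: "a * cnj a + b * cnj b = 1"
    and B: "B = unitary2 a b ** mat2 p q 0 r ** ctranspose (unitary2 a b)"
    by (rule schur_decomposition2)
  have "summable (\<lambda>k. (1 / fact k) *\<^sub>R matpow B k)"
    unfolding B using sums_exp_series_conj[OF sums_exp_series_upper_tri unitary2_inverse[OF ab]]
    by (rule sums_summable)
  then show ?thesis unfolding mexp_def by (rule summable_sums)
qed

lemma mexp_conj_complex2:
  fixes U V B :: "complex^2^2"
  assumes "V ** U = mat 1" "U ** V = mat 1"
  shows "mexp (U ** B ** V) = U ** mexp B ** V"
  unfolding mexp_def[of "U ** B ** V"]
  by (rule sums_unique[symmetric, OF sums_exp_series_conj[OF sums_exp_series_complex2 assms]])

lemma normal_complex_unitary_conj: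
  fixes T U :: "complex^2^2"
  assumes "ctranspose U ** U = mat 1" "normal_complex T"
  shows "normal_complex (U ** T ** ctranspose U)"
proof -
  let ?V = "ctranspose U"
  have "ctranspose ?V = U" by (simp add: ctranspose_def vec_eq_iff)
  then have "ctranspose (U ** T ** ?V) = U ** ctranspose T ** ?V"
    by (simp add: ctranspose_matrix_mult matrix_mul_assoc)
  moreover have "U ** X ** ?V ** (U ** Y ** ?V) = U ** (X ** Y) ** ?V" for X Y
  proof -
    have "U ** X ** ?V ** (U ** Y ** ?V) = U ** X ** (?V ** U) ** Y ** ?V" by (simp add: matrix_mul_assoc)
    then show ?thesis using assms(1) by (simp add: matrix_mul_assoc)
  qed
  ultimately show ?thesis using assms(2) by (simp add: normal_complex_def)
qed

lemma normal_complex_diag2: "normal_complex (mat2 p 0 0 r)"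
  by (simp add: normal_complex_def ctranspose_mat2 mat2_mult mult.commute)

theorem magnus_mexp_less_opnorm_complex2:
  fixes A :: "complex^2^2"
  assumes "\<not> normal_complex A"
  shows "magnus (mexp A) < ereal (opnorm A)"
proof -
  obtain a b p q r where ab: "a * cnj a + b * cnj b = 1"
    and A: "A = unitary2 a b ** mat2 p q 0 r ** ctranspose (unitary2 a b)"
    by (rule schur_decomposition2)
  have "q \<noteq> 0"
  proof
    assume "q = 0"
    then have "normal_complex A"
      unfolding A \<open>q = 0\<close> by (intro normal_complex_unitary_conj unitary2_inverse(1)[OF ab] normal_complex_diag2)
    with assms show False by simp
  qed
  then have "cheaper_exp_factorization (mat2 p q 0 r)" by (rule cheaper_exp_factorization_upper_tri)
  then have "cheaper_exp_factorization A"
    unfolding A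
    by (rule cheaper_exp_factorization_conj[OF _ mexp_conj_complex2[OF unitary2_inverse[OF ab]]
          unitary2_inverse[OF ab] norm_unitary2_mult_vec[OF ab] norm_ctranspose_unitary2_mult_vec[OF ab]])
  then show ?thesis by (rule magnus_mexp_less_opnorm)
qed

section \<open>Real matrices as real-linear maps of the complex plane\<close>

text \<open>\<open>rmat z w\<close> is the matrix of the real-linear map \<open>\<xi> \<mapsto> z \<xi> + w cnj \<xi>\<close> of \<open>\<complex> = \<real>\<^sup>2\<close>.\<close>
definition rmat :: "complex \<Rightarrow> complex \<Rightarrow> real^2^2" where
  "rmat z w = mat2 (Re z + Re w) (Im w - Im z) (Im z + Im w) (Re z - Re w)"

lemma rmat_eq_iff [simp]: "rmat z w = rmat z' w' \<longleftrightarrow> z = z' \<and> w = w'"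
  by (auto simp: rmat_def mat2_eq_iff complex_eq_iff)

lemma rmat_mult: "rmat z1 w1 ** rmat z2 w2 = rmat (z1 * z2 + w1 * cnj w2) (z1 * w2 + w1 * cnj z2)"
  by (simp add: rmat_def mat2_mult mat2_eq_iff algebra_simps)

lemma mat_1_eq_rmat: "mat 1 = rmat 1 0"
  by (simp add: rmat_def mat_1_eq_mat2)

lemma rmat_cases:
  obtains z w where "A = rmat z w"
proof
  show "A = rmat (Complex ((A$1$1 + A$2$2)/2) ((A$2$1 - A$1$2)/2)) (Complex ((A$1$1 - A$2$2)/2) ((A$2$1 + A$1$2)/2))"
    by (subst mat2_eta) (simp add: rmat_def mat2_eq_iff field_simps)
qed

lemma transpose_rmat: "transpose (rmat z w) = rmat (cnj z) w"
  by (simp add: rmat_def transpose_def vec_eq_iff forall_2)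

lemma normal_real_rmat:
  assumes "w = 0 \<or> Im z = 0"
  shows "normal_real (rmat z w)"
proof -
  have "z * w + w * cnj (cnj z) = cnj z * w + w * cnj z"
    using assms by (auto simp: complex_eq_iff)
  then show ?thesis by (simp add: normal_real_def transpose_rmat rmat_mult)
qed

lemma norm_rmat_mult_vec:
  "norm (rmat z w *v x) = cmod (z * Complex (x$1) (x$2) + w * cnj (Complex (x$1) (x$2)))"
  by (simp add: norm_vec2 rmat_def mat2_mult_vec cmod_def algebra_simps)

lemma norm_real_vec2: "norm (x :: real^2) = cmod (Complex (x$1) (x$2))"
  by (simp add: norm_vec2 cmod_def)

lemma opnorm_rmat: "opnorm (rmat z w) = cmod z + cmod w"
proof (rule antisym)
  show "opnorm (rmat z w) \<le> cmod z + cmod w"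
    unfolding opnorm_def
  proof (rule onorm_le)
    fix x :: "real^2"
    define \<xi> where "\<xi> = Complex (x$1) (x$2)"
    have "cmod (z * \<xi> + w * cnj \<xi>) \<le> cmod z * cmod \<xi> + cmod w * cmod \<xi>"
      by (rule order_trans[OF norm_triangle_ineq]) (simp add: norm_mult)
    then show "norm (rmat z w *v x) \<le> (cmod z + cmod w) * norm x"
      unfolding norm_rmat_mult_vec norm_real_vec2[of x] \<xi>_def[symmetric] by (simp add: algebra_simps)
  qed
next
  define th where "th = (Arg w - Arg z) / 2"
  define x :: "real^2" where "x = (\<chi> i. if i = 1 then cos th else sin th)"
  have xc: "Complex (x$1) (x$2) = cis th" by (simp add: x_def complex_eq_iff)
  have "z * cis th = of_real (cmod z) * cis ((Arg z + Arg w) / 2)"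
    by (subst rcis_cmod_Arg[symmetric]) (simp add: rcis_def cis_mult th_def field_simps)
  moreover have "w * cnj (cis th) = of_real (cmod w) * cis ((Arg z + Arg w) / 2)"
    by (subst rcis_cmod_Arg[symmetric]) (simp add: rcis_def cis_cnj cis_mult th_def field_simps)
  ultimately have "norm (rmat z w *v x) = cmod (of_real (cmod z + cmod w) * cis ((Arg z + Arg w) / 2))"
    unfolding norm_rmat_mult_vec xc by (simp add: algebra_simps)
  also have "\<dots> = cmod z + cmod w" by (simp only: norm_mult norm_of_real norm_cis) simp
  finally have "norm (rmat z w *v x) = cmod z + cmod w" .
  moreover have "norm (rmat z w *v x) \<le> opnorm (rmat z w) * norm x"
    unfolding opnorm_def by (rule onorm) simp
  moreover have "norm x = 1" by (simp add: norm_real_vec2 xc)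
  ultimately show "cmod z + cmod w \<le> opnorm (rmat z w)" by simp
qed

text \<open>\<open>rmat z w = Re z \<cdot> 1 + N\<close> with \<open>N = rmat (\<i> Im z) w\<close> and \<open>N\<^sup>2 = (|w|\<^sup>2 - (Im z)\<^sup>2) \<cdot> 1\<close>,
  so \<open>rmat z w ^ k = P\<^sub>k \<cdot> 1 + Q\<^sub>k \<cdot> N\<close>; \<open>rmat_pow_coeffs (Re z) (|w|\<^sup>2 - (Im z)\<^sup>2) k = (P\<^sub>k, Q\<^sub>k)\<close>.\<close>
primrec rmat_pow_coeffs :: "real \<Rightarrow> real \<Rightarrow> nat \<Rightarrow> real \<times> real" where
  "rmat_pow_coeffs \<alpha> \<delta> 0 = (1, 0)"
| "rmat_pow_coeffs \<alpha> \<delta> (Suc k) =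
     (\<alpha> * fst (rmat_pow_coeffs \<alpha> \<delta> k) + \<delta> * snd (rmat_pow_coeffs \<alpha> \<delta> k),
      fst (rmat_pow_coeffs \<alpha> \<delta> k) + \<alpha> * snd (rmat_pow_coeffs \<alpha> \<delta> k))"

lemma rmat_linear_combination:
  "rmat (of_real p + \<i> * of_real (\<omega> * q)) (of_real q * w) = p *\<^sub>R rmat 1 0 + q *\<^sub>R rmat (\<i> * of_real \<omega>) w"
  by (simp add: rmat_def mat2_scaleR mat2_add mat2_eq_iff algebra_simps)

lemma matpow_rmat:
  fixes z w :: complex
  defines "c \<equiv> rmat_pow_coeffs (Re z) ((cmod w)\<^sup>2 - (Im z)\<^sup>2)"
  shows "matpow (rmat z w) k = rmat (of_real (fst (c k)) + \<i> * of_real (Im z * snd (c k))) (of_real (snd (c k)) * w)"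
proof (induction k)
  case 0 then show ?case by (simp add: c_def mat_1_eq_rmat)
next
  case (Suc k)
  have "cmod w * cmod w = Re w * Re w + Im w * Im w" using cmod_power2[of w] by (simp add: power2_eq_square)
  then show ?case by (simp add: Suc c_def rmat_mult complex_eq_iff power2_eq_square algebra_simps)
qed

lemma mexp_rmat_from_coeff_sums:
  fixes z w :: complex
  defines "c \<equiv> rmat_pow_coeffs (Re z) ((cmod w)\<^sup>2 - (Im z)\<^sup>2)"
  assumes "(\<lambda>k. fst (c k) / fact k) sums C" "(\<lambda>k. snd (c k) / fact k) sums S"
  shows "mexp (rmat z w) = rmat (of_real C + \<i> * of_real (Im z * S)) (of_real S * w)"
proof -
  let ?N = "rmat (\<i> * of_real (Im z)) w"
  have "(\<lambda>k. (fst (c k) / fact k) *\<^sub>R rmat 1 0 + (snd (c k) / fact k) *\<^sub>R ?N) sums (C *\<^sub>R rmat 1 0 + S *\<^sub>R ?N)"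
    by (intro sums_add sums_scaleR_left assms)
  moreover have "(\<lambda>k. (1 / fact k) *\<^sub>R matpow (rmat z w) k) =
                 (\<lambda>k. (fst (c k) / fact k) *\<^sub>R rmat 1 0 + (snd (c k) / fact k) *\<^sub>R ?N)"
    by (rule ext) (simp only: matpow_rmat c_def rmat_linear_combination, simp add: scaleR_add_right)
  ultimately show ?thesis
    unfolding mexp_def rmat_linear_combination by (simp add: sums_iff)
qed

lemma rmat_pow_coeffs_elliptic:
  assumes "\<delta> = - \<mu>\<^sup>2"
  shows "of_real (fst (rmat_pow_coeffs \<alpha> \<delta> k)) + \<i> * of_real (\<mu> * snd (rmat_pow_coeffs \<alpha> \<delta> k))
         = (Complex \<alpha> \<mu>) ^ k"
proof (induction k)
  case (Suc k)
  show ?case unfolding power_Suc Suc[symmetric] using assms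
    by (simp add: complex_eq_iff power2_eq_square algebra_simps)
qed simp

lemma rmat_pow_coeffs_hyperbolic:
  assumes "\<delta> = \<nu>\<^sup>2"
  shows "fst (rmat_pow_coeffs \<alpha> \<delta> k) + \<nu> * snd (rmat_pow_coeffs \<alpha> \<delta> k) = (\<alpha> + \<nu>) ^ k"
        "fst (rmat_pow_coeffs \<alpha> \<delta> k) - \<nu> * snd (rmat_pow_coeffs \<alpha> \<delta> k) = (\<alpha> - \<nu>) ^ k"
proof (induction k)
  case (Suc k)
  show "fst (rmat_pow_coeffs \<alpha> \<delta> (Suc k)) + \<nu> * snd (rmat_pow_coeffs \<alpha> \<delta> (Suc k)) = (\<alpha> + \<nu>) ^ Suc k"
       "fst (rmat_pow_coeffs \<alpha> \<delta> (Suc k)) - \<nu> * snd (rmat_pow_coeffs \<alpha> \<delta> (Suc k)) = (\<alpha> - \<nu>) ^ Suc k"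
    unfolding power_Suc Suc[symmetric] using assms by (simp_all add: power2_eq_square algebra_simps)
qed simp_all

lemma rmat_pow_coeffs_parabolic:
  "fst (rmat_pow_coeffs \<alpha> 0 k) = \<alpha> ^ k" "snd (rmat_pow_coeffs \<alpha> 0 k) = of_nat k * \<alpha> ^ (k - 1)"
proof (induction k)
  case (Suc k) then show "fst (rmat_pow_coeffs \<alpha> 0 (Suc k)) = \<alpha> ^ Suc k"
    "snd (rmat_pow_coeffs \<alpha> 0 (Suc k)) = of_nat (Suc k) * \<alpha> ^ (Suc k - 1)"
    by (cases k; simp add: algebra_simps)+
qed simp_all

lemma exp_series_real: "(\<lambda>k. (x::real) ^ k / fact k) sums exp x"
  using exp_converges[of x] by (simp add: divide_inverse mult.commute)

lemma mexp_rmat_elliptic: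
  assumes "(cmod w)\<^sup>2 < (Im z)\<^sup>2"
  defines "\<mu> \<equiv> sqrt ((Im z)\<^sup>2 - (cmod w)\<^sup>2)"
  shows "mexp (rmat z w) = rmat (of_real (exp (Re z) * cos \<mu>) + \<i> * of_real (Im z * (exp (Re z) * sin \<mu> / \<mu>)))
                               (of_real (exp (Re z) * sin \<mu> / \<mu>) * w)"
proof -
  define c where "c = rmat_pow_coeffs (Re z) ((cmod w)\<^sup>2 - (Im z)\<^sup>2)"
  define L where "L = Complex (Re z) \<mu>"
  have \<mu>0: "\<mu> > 0" using assms by (simp add: \<mu>_def)
  have \<delta>: "(cmod w)\<^sup>2 - (Im z)\<^sup>2 = - \<mu>\<^sup>2" using assms by (simp add: \<mu>_def)
  have "L ^ k = of_real (fst (c k)) + \<i> * of_real (\<mu> * snd (c k))" for k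
    unfolding c_def \<delta> L_def by (rule rmat_pow_coeffs_elliptic[OF refl, symmetric])
  then have C: "fst (c k) = Re (L ^ k)" and S: "snd (c k) = Im (L ^ k) / \<mu>" for k
    using \<mu>0 by simp_all
  have sL: "(\<lambda>k. L ^ k /\<^sub>R fact k) sums exp L" by (rule exp_converges)
  have "(\<lambda>k. fst (c k) / fact k) sums Re (exp L)"
    using bounded_linear.sums[OF bounded_linear_Re sL] by (simp add: C divide_inverse mult.commute)
  moreover have "(\<lambda>k. snd (c k) / fact k) sums (Im (exp L) / \<mu>)"
    using sums_divide[OF bounded_linear.sums[OF bounded_linear_Im sL], of \<mu>]
    by (simp add: S divide_inverse mult_ac)
  ultimately have "mexp (rmat z w) = rmat (of_real (Re (exp L)) + \<i> * of_real (Im z * (Im (exp L) / \<mu>)))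
                                          (of_real (Im (exp L) / \<mu>) * w)"
    unfolding c_def by (rule mexp_rmat_from_coeff_sums)
  then show ?thesis by (simp add: Re_exp Im_exp L_def)
qed

lemma mexp_rmat_hyperbolic:
  assumes "(Im z)\<^sup>2 < (cmod w)\<^sup>2"
  defines "\<nu> \<equiv> sqrt ((cmod w)\<^sup>2 - (Im z)\<^sup>2)"
  shows "mexp (rmat z w) = rmat (of_real (exp (Re z) * cosh \<nu>) + \<i> * of_real (Im z * (exp (Re z) * sinh \<nu> / \<nu>)))
                               (of_real (exp (Re z) * sinh \<nu> / \<nu>) * w)"
proof -
  define c where "c = rmat_pow_coeffs (Re z) ((cmod w)\<^sup>2 - (Im z)\<^sup>2)"
  define \<alpha> where "\<alpha> = Re z"
  have \<nu>0: "\<nu> > 0" using assms by (simp add: \<nu>_def)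
  have "(cmod w)\<^sup>2 - (Im z)\<^sup>2 = \<nu>\<^sup>2" using assms by (simp add: \<nu>_def)
  note pm = rmat_pow_coeffs_hyperbolic[OF this, of "Re z", folded c_def \<alpha>_def]
  have "fst (c k) * 2 = (\<alpha> + \<nu>) ^ k + (\<alpha> - \<nu>) ^ k" "\<nu> * snd (c k) * 2 = (\<alpha> + \<nu>) ^ k - (\<alpha> - \<nu>) ^ k"
    for k using pm[of k] by linarith+
  then have cs: "fst (c k) = ((\<alpha> + \<nu>) ^ k + (\<alpha> - \<nu>) ^ k) / 2"
    "snd (c k) = ((\<alpha> + \<nu>) ^ k - (\<alpha> - \<nu>) ^ k) / (2 * \<nu>)" for k
    using \<nu>0 by (simp_all add: field_simps)
  have C: "fst (c k) / fact k = ((\<alpha> + \<nu>) ^ k / fact k + (\<alpha> - \<nu>) ^ k / fact k) / 2" for k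
    by (simp add: cs add_divide_distrib)
  have S: "snd (c k) / fact k = ((\<alpha> + \<nu>) ^ k / fact k - (\<alpha> - \<nu>) ^ k / fact k) / (2 * \<nu>)" for k
    by (simp add: cs diff_divide_distrib ac_simps)
  have "(\<lambda>k. fst (c k) / fact k) sums ((exp (\<alpha> + \<nu>) + exp (\<alpha> - \<nu>)) / 2)"
    unfolding C by (intro sums_divide sums_add exp_series_real)
  moreover have "(\<lambda>k. snd (c k) / fact k) sums ((exp (\<alpha> + \<nu>) - exp (\<alpha> - \<nu>)) / (2 * \<nu>))"
    unfolding S by (intro sums_divide sums_diff exp_series_real)
  moreover have "(exp (\<alpha> + \<nu>) + exp (\<alpha> - \<nu>)) / 2 = exp \<alpha> * cosh \<nu>"
    and "(exp (\<alpha> + \<nu>) - exp (\<alpha> - \<nu>)) / (2 * \<nu>) = exp \<alpha> * sinh \<nu> / \<nu>"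
    by (simp_all add: cosh_def sinh_def exp_add exp_diff exp_minus field_simps)
  ultimately show ?thesis unfolding c_def \<alpha>_def by (simp add: mexp_rmat_from_coeff_sums)
qed

lemma mexp_rmat_parabolic:
  assumes "(cmod w)\<^sup>2 = (Im z)\<^sup>2"
  shows "mexp (rmat z w) = rmat (of_real (exp (Re z)) + \<i> * of_real (Im z * exp (Re z))) (of_real (exp (Re z)) * w)"
proof (rule mexp_rmat_from_coeff_sums)
  let ?c = "rmat_pow_coeffs (Re z) ((cmod w)\<^sup>2 - (Im z)\<^sup>2)"
  have \<delta>: "(cmod w)\<^sup>2 - (Im z)\<^sup>2 = 0" using assms by simp
  show "(\<lambda>k. fst (?c k) / fact k) sums exp (Re z)"
    unfolding \<delta> rmat_pow_coeffs_parabolic by (rule exp_series_real)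
  have "(\<lambda>k. snd (?c (Suc k)) / fact (Suc k)) = (\<lambda>k. Re z ^ k / fact k)"
    unfolding \<delta> rmat_pow_coeffs_parabolic by (simp add: divide_simps del: of_nat_Suc)
  then have "(\<lambda>k. snd (?c (Suc k)) / fact (Suc k)) sums exp (Re z)" using exp_series_real by simp
  then have "(\<lambda>k. snd (?c k) / fact k) sums (exp (Re z) + snd (?c 0) / fact 0)"
    by (rule sums_Suc_iff[THEN iffD1])
  then show "(\<lambda>k. snd (?c k) / fact k) sums exp (Re z)" by simp
qed

section \<open>Elementary inequalities\<close>

lemma DERIV_pos_imp_positive:
  fixes f f' :: "real \<Rightarrow> real"
  assumes "0 < x" "f 0 = 0" "continuous_on {0..x} f"
    and "\<And>t. 0 < t \<Longrightarrow> t < x \<Longrightarrow> (f has_real_derivative f' t) (at t)"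
    and "\<And>t. 0 < t \<Longrightarrow> t < x \<Longrightarrow> 0 < f' t"
  shows "0 < f x"
proof -
  have "f 0 < f x"
    by (rule DERIV_pos_imp_increasing_open[OF assms(1) _ assms(3)]) (use assms(4,5) in blast)
  with assms(2) show ?thesis by simp
qed

lemma sin_less_self:
  fixes x :: real
  assumes "0 < x"
  shows "sin x < x"
proof (cases "x \<le> 1")
  case True
  have "0 < x - sin x"
  proof (rule DERIV_pos_imp_positive[where f = "\<lambda>t. t - sin t" and f' = "\<lambda>t. 1 - cos t"])
    show "((\<lambda>t. t - sin t) has_real_derivative 1 - cos t) (at t)" for t :: real
      by (auto intro!: derivative_eq_intros)
    show "0 < 1 - cos t" if "0 < t" "t < x" for t :: real
      using cos_monotone_0_pi[of 0 t] that True pi_ge_two by simp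
  qed (use assms in \<open>auto intro!: continuous_intros\<close>)
  then show ?thesis by simp
qed (use sin_le_one[of x] in linarith)

lemma less_sinh_self:
  fixes x :: real
  assumes "0 < x"
  shows "x < sinh x"
proof -
  have "0 < sinh x - x"
  proof (rule DERIV_pos_imp_positive[where f = "\<lambda>t. sinh t - t" and f' = "\<lambda>t. cosh t - 1"])
    show "((\<lambda>t. sinh t - t) has_real_derivative cosh t - 1) (at t)" for t :: real
      by (auto intro!: derivative_eq_intros)
    show "0 < cosh t - 1" if "0 < t" for t :: real
      using that cosh_real_ge_1[of t] cosh_real_one_iff[of t] by linarith
  qed (use assms in \<open>auto intro!: continuous_intros\<close>)
  then show ?thesis by simp
qed

lemma sinh_less_mult_cosh:
  fixes x :: real
  assumes "0 < x"
  shows "sinh x < x * cosh x"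
proof -
  have "0 < x * cosh x - sinh x"
  proof (rule DERIV_pos_imp_positive[where f = "\<lambda>t. t * cosh t - sinh t" and f' = "\<lambda>t. t * sinh t"])
    show "((\<lambda>t. t * cosh t - sinh t) has_real_derivative t * sinh t) (at t)" for t :: real
      by (auto intro!: derivative_eq_intros)
  qed (use assms in \<open>auto intro!: continuous_intros\<close>)
  then show ?thesis by simp
qed

lemma arctan_less_self:
  fixes x :: real
  assumes "0 < x"
  shows "arctan x < x"
proof -
  have "0 < x - arctan x"
  proof (rule DERIV_pos_imp_positive[where f = "\<lambda>t. t - arctan t" and f' = "\<lambda>t. 1 - inverse (1 + t\<^sup>2)"])
    show "((\<lambda>t. t - arctan t) has_real_derivative 1 - inverse (1 + t\<^sup>2)) (at t)" for t :: real
      by (auto intro!: derivative_eq_intros)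
    show "0 < 1 - inverse (1 + t\<^sup>2)" if "0 < t" for t :: real
      using that inverse_less_1_iff[of "1 + t\<^sup>2"] by simp
  qed (use assms in \<open>auto intro!: continuous_intros\<close>)
  then show ?thesis by simp
qed

lemma abs_arctan_less:
  fixes x :: real
  assumes "x \<noteq> 0"
  shows "\<bar>arctan x\<bar> < \<bar>x\<bar>"
proof (cases "x > 0")
  case False
  then show ?thesis using arctan_less_self[of "- x"] assms by (simp add: arctan_minus)
qed (use arctan_less_self in simp)

lemma sinh_div_strict_mono:
  fixes a b :: real
  assumes "0 < a" "a < b"
  shows "sinh a / a < sinh b / b"
proof (rule DERIV_pos_imp_increasing[OF assms(2)])
  fix x assume "a \<le> x" "x \<le> b"
  then have x0: "x > 0" using assms by simp
  have "((\<lambda>t. sinh t / t) has_real_derivative (cosh x * x - sinh x * 1) / x\<^sup>2) (at x)"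
    using x0 by (auto intro!: derivative_eq_intros simp: power2_eq_square)
  moreover have "(cosh x * x - sinh x * 1) / x\<^sup>2 > 0"
    using sinh_less_mult_cosh[OF x0] x0 by (simp add: algebra_simps)
  ultimately show "\<exists>y. ((\<lambda>t. sinh t / t) has_real_derivative y) (at x) \<and> 0 < y" by blast
qed

text \<open>\<open>t \<mapsto> t cot t\<close> is strictly decreasing on \<open>(0, \<pi>)\<close>.\<close>
lemma mult_cot_strict_antimono:
  fixes m W :: real
  assumes "0 < m" "m < W" "W < pi"
  shows "W * cos W * sin m < m * cos m * sin W"
proof -
  have "W * cos W / sin W < m * cos m / sin m"
  proof (rule DERIV_neg_imp_decreasing[OF assms(2)])
    fix x assume "m \<le> x" "x \<le> W"
    then have x: "0 < x" "x < pi" using assms by auto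
    then have sx: "sin x > 0" by (simp add: sin_gt_zero)
    let ?d = "((1 * cos x + (- sin x) * x) * sin x - x * cos x * cos x) / (sin x * sin x)"
    have "((\<lambda>t. t * cos t / sin t) has_real_derivative ?d) (at x)"
      using sx by (auto intro!: derivative_eq_intros simp: power2_eq_square)
    moreover have "(1 * cos x + (- sin x) * x) * sin x - x * cos x * cos x = sin x * cos x - x"
      using sin_cos_squared_add[of x] by algebra
    moreover have "sin x * cos x < x"
      using sin_less_self[of "2 * x"] x by (simp add: sin_double)
    ultimately show "\<exists>y. ((\<lambda>t. t * cos t / sin t) has_real_derivative y) (at x) \<and> y < 0"
      using sx by (intro exI[of _ ?d]) (auto simp: divide_neg_pos)
  qed
  moreover have "sin m > 0" "sin W > 0" using assms by (auto intro: sin_gt_zero)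
  ultimately show ?thesis by (simp add: field_simps)
qed

lemma abs_sin_less:
  fixes x :: real
  assumes "0 < x"
  shows "\<bar>sin x\<bar> < x"
proof (cases "x \<le> 1")
  case True
  then have "sin x > 0" using assms pi_ge_two by (intro sin_gt_zero) auto
  then show ?thesis using sin_less_self[OF assms] by simp
qed (use abs_sin_le_one[of x] in linarith)

section \<open>The real case\<close>

lemma mexp_rmat_rotation: "mexp (rmat (Complex \<alpha> \<phi>) 0) = rmat (of_real (exp \<alpha>) * cis \<phi>) 0"
proof (cases "\<phi> = 0")
  case True
  then show ?thesis using mexp_rmat_parabolic[of 0 "Complex \<alpha> \<phi>"] by (simp add: complex_eq_iff)
next
  case False
  then have "(cmod 0)\<^sup>2 < (Im (Complex \<alpha> \<phi>))\<^sup>2" by simp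
  moreover have "\<phi> * (exp \<alpha> * sin \<bar>\<phi>\<bar>) / \<bar>\<phi>\<bar> = exp \<alpha> * sin \<phi>"
    using False by (cases "\<phi> > 0") (simp_all add: field_simps)
  ultimately show ?thesis by (simp add: mexp_rmat_elliptic complex_eq_iff)
qed

lemma mexp_rmat_symmetric:
  assumes "r \<ge> 0" "cmod v = 1"
  shows "mexp (rmat 0 (of_real r * v)) = rmat (of_real (cosh r)) (of_real (sinh r) * v)"
proof (cases "r = 0")
  case True
  then show ?thesis using mexp_rmat_parabolic[of "of_real r * v" 0] by simp
next
  case False
  then have "(Im 0)\<^sup>2 < (cmod (of_real r * v))\<^sup>2" using assms by (simp add: norm_mult)
  from mexp_rmat_hyperbolic[OF this] show ?thesis using assms False by (simp add: norm_mult)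
qed

text \<open>A polar-type factorization: \<open>exp (rmat z w) = e\<^bsup>Re z\<^esup> rmat m n\<close> with \<open>|m|\<^sup>2 - |n|\<^sup>2 = 1\<close> is the
  product of the rotation-dilation \<open>exp (rmat (Re z + \<i> Arg m) 0)\<close> and the symmetric
  \<open>exp (rmat 0 (\<rho> v))\<close> with \<open>cosh \<rho> = |m|\<close>, \<open>sinh \<rho> = |n|\<close>, of total cost
  \<open>|Re z + \<i> Arg m| + \<rho>\<close>.\<close>
lemma cheaper_exp_factorization_polar:
  assumes em: "mexp (rmat z w) = rmat (of_real (exp (Re z)) * m) (of_real (exp (Re z)) * n)"
    and det: "(cmod m)\<^sup>2 - (cmod n)\<^sup>2 = 1"
    and hn: "cmod n < sinh (cmod w)"
    and ha: "\<bar>Arg m\<bar> < \<bar>Im z\<bar>"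
  shows "cheaper_exp_factorization (rmat z w)"
proof -
  define \<rho> where "\<rho> = arsinh (cmod n)"
  define \<phi> where "\<phi> = Arg m"
  define v where "v = (if n = 0 then 1 else n / (of_real (cmod n) * cis \<phi>))"
  have v1: "cmod v = 1" by (auto simp: v_def norm_divide norm_mult)
  have "\<not> arsinh (cmod n) < 0" by simp
  then have \<rho>0: "\<rho> \<ge> 0" unfolding \<rho>_def by linarith
  have "(cmod n)\<^sup>2 + 1 = (cmod m)\<^sup>2" using det by simp
  then have ch: "cosh \<rho> = cmod m" by (simp add: \<rho>_def cosh_arsinh_real)
  then have "m \<noteq> 0" using cosh_real_ge_1[of \<rho>] by auto
  then have "cis \<phi> * of_real (cosh \<rho>) = m"
    by (simp add: \<phi>_def ch cis_Arg complex_sgn_def scaleR_conv_of_real field_simps)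
  moreover have "cis \<phi> * (of_real (sinh \<rho>) * v) = n"
    by (cases "n = 0") (simp_all add: \<rho>_def v_def field_simps)
  ultimately have "mexp (rmat (Complex (Re z) \<phi>) 0) ** mexp (rmat 0 (of_real \<rho> * v)) = mexp (rmat z w)"
    by (simp add: mexp_rmat_rotation mexp_rmat_symmetric[OF \<rho>0 v1] rmat_mult em mult.assoc)
  moreover have "\<rho> < cmod w"
    using hn arsinh_real_strict_mono by (metis \<rho>_def arsinh_sinh_real)
  moreover have "cmod (Complex (Re z) \<phi>) < cmod z"
  proof -
    have "\<phi>\<^sup>2 < (Im z)\<^sup>2" using ha unfolding \<phi>_def by (metis abs_ge_zero power2_abs power_strict_mono zero_less_numeral)
    then show ?thesis by (simp add: cmod_def)
  qed
  then have "opnorm (rmat 0 (of_real \<rho> * v)) + opnorm (rmat (Complex (Re z) \<phi>) 0) < opnorm (rmat z w)"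
    using \<open>\<rho> < cmod w\<close> \<rho>0 v1 unfolding opnorm_rmat by (simp add: norm_mult)
  ultimately show ?thesis by (intro cheaper_exp_factorization_pair)
qed

lemma sin_abs_Arg:
  assumes "z \<noteq> 0"
  shows "sin \<bar>Arg z\<bar> = \<bar>Im z\<bar> / cmod z"
proof (cases "Arg z \<ge> 0")
  case True
  then have "sin (Arg z) \<ge> 0" using Arg_bounded[of z] by (intro sin_ge_zero) auto
  then have "Im z \<ge> 0" using sin_Arg[OF assms] assms by (simp add: zero_le_divide_iff)
  then show ?thesis using True sin_Arg[OF assms] by simp
next
  case False
  then have "sin (- Arg z) \<ge> 0" using Arg_bounded[of z] by (intro sin_ge_zero) auto
  then have "Im z \<le> 0" using sin_Arg[OF assms] assms by (simp add: divide_le_0_iff)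
  then show ?thesis using False sin_Arg[OF assms] by simp
qed

lemma abs_Arg_elliptic_less:
  fixes \<mu> \<omega> :: real
  assumes \<mu>: "0 < \<mu>" "\<mu> < \<bar>\<omega>\<bar>"
  shows "\<bar>Arg (Complex (cos \<mu>) (\<omega> * sin \<mu> / \<mu>))\<bar> < \<bar>\<omega>\<bar>"
proof (cases "\<bar>\<omega>\<bar> \<le> pi")
  case False
  then show ?thesis using Arg_bounded by (smt (verit))
next
  case True
  define W where "W = \<bar>\<omega>\<bar>"
  define m where "m = Complex (cos \<mu>) (\<omega> * sin \<mu> / \<mu>)"
  define \<theta> where "\<theta> = \<bar>Arg m\<bar>"
  have smu: "sin \<mu> > 0" using \<mu> True by (intro sin_gt_zero) auto
  then have "Im m \<noteq> 0" using \<mu> by (simp add: m_def)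
  then have m0: "m \<noteq> 0" and nm: "cmod m > 0" by auto
  have "cos \<theta> = cos \<mu> / cmod m" using cos_Arg[OF m0] by (simp add: \<theta>_def m_def)
  moreover have "sin \<theta> = W * sin \<mu> / \<mu> / cmod m"
    using sin_abs_Arg[OF m0] smu \<mu> by (simp add: \<theta>_def m_def W_def abs_mult)
  ultimately have "sin (W - \<theta>) = (\<mu> * cos \<mu> * sin W - W * cos W * sin \<mu>) / (\<mu> * cmod m)"
    using \<mu> nm by (simp add: sin_diff field_simps)
  moreover have "W * cos W * sin \<mu> < \<mu> * cos \<mu> * sin W"
  proof (cases "W = pi")
    case True then show ?thesis using smu by simp
  next
    case False then show ?thesis using mult_cot_strict_antimono[of \<mu> W] \<mu> True by (simp add: W_def)
  qed
  ultimately have "sin (W - \<theta>) > 0" using \<mu> nm by simp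
  moreover have "\<theta> \<le> pi" using Arg_bounded[of m] by (simp add: \<theta>_def abs_le_iff)
  ultimately have "\<theta> < W"
    using sin_ge_zero[of "\<theta> - W"] \<mu> by (smt (verit) sin_minus W_def)
  then show ?thesis by (simp add: \<theta>_def m_def W_def)
qed

lemma cheaper_exp_factorization_rmat_elliptic:
  assumes w: "w \<noteq> 0" and \<delta>: "(cmod w)\<^sup>2 < (Im z)\<^sup>2"
  shows "cheaper_exp_factorization (rmat z w)"
proof -
  define \<mu> where "\<mu> = sqrt ((Im z)\<^sup>2 - (cmod w)\<^sup>2)"
  have \<mu>0: "\<mu> > 0" and \<mu>2: "\<mu>\<^sup>2 = (Im z)\<^sup>2 - (cmod w)\<^sup>2" using \<delta> by (simp_all add: \<mu>_def)
  have "\<mu>\<^sup>2 < \<bar>Im z\<bar>\<^sup>2" using \<mu>2 w by simp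
  then have \<mu>W: "\<mu> < \<bar>Im z\<bar>" by (rule power_less_imp_less_base) simp
  define m n where "m = Complex (cos \<mu>) (Im z * sin \<mu> / \<mu>)" and "n = of_real (sin \<mu> / \<mu>) * w"
  have nn: "cmod n = \<bar>sin \<mu> / \<mu>\<bar> * cmod w" unfolding n_def norm_mult norm_of_real ..
  have "mexp (rmat z w) = rmat (of_real (exp (Re z)) * m) (of_real (exp (Re z)) * n)"
    using mexp_rmat_elliptic[OF \<delta>] by (simp add: \<mu>_def[symmetric] m_def n_def complex_eq_iff algebra_simps)
  moreover have "(cmod m)\<^sup>2 - (cmod n)\<^sup>2 = (cos \<mu>)\<^sup>2 + (sin \<mu> / \<mu>)\<^sup>2 * \<mu>\<^sup>2"
  proof -
    have "(cmod m)\<^sup>2 = (cos \<mu>)\<^sup>2 + (Im z)\<^sup>2 * (sin \<mu> / \<mu>)\<^sup>2"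
      by (simp add: m_def cmod_power2 power_mult_distrib power_divide)
    moreover have "(cmod n)\<^sup>2 = (sin \<mu> / \<mu>)\<^sup>2 * (cmod w)\<^sup>2" by (simp only: nn power_mult_distrib power2_abs)
    ultimately show ?thesis by (simp add: \<mu>2 algebra_simps)
  qed
  then have "(cmod m)\<^sup>2 - (cmod n)\<^sup>2 = 1" using \<mu>0 by (simp add: power_divide)
  moreover have "cmod n < sinh (cmod w)"
  proof -
    have "cmod n = \<bar>sin \<mu>\<bar> / \<mu> * cmod w" using nn \<mu>0 by simp
    also have "\<dots> < 1 * cmod w" using abs_sin_less[OF \<mu>0] \<mu>0 w by (intro mult_strict_right_mono) auto
    also have "\<dots> < sinh (cmod w)" using less_sinh_self[of "cmod w"] w by simp
    finally show ?thesis .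
  qed
  moreover have "\<bar>Arg m\<bar> < \<bar>Im z\<bar>" unfolding m_def using \<mu>0 \<mu>W by (rule abs_Arg_elliptic_less)
  ultimately show ?thesis by (rule cheaper_exp_factorization_polar)
qed

lemma cheaper_exp_factorization_rmat_hyperbolic:
  assumes \<omega>: "Im z \<noteq> 0" and \<delta>: "(Im z)\<^sup>2 < (cmod w)\<^sup>2"
  shows "cheaper_exp_factorization (rmat z w)"
proof -
  define \<nu> where "\<nu> = sqrt ((cmod w)\<^sup>2 - (Im z)\<^sup>2)"
  have \<nu>0: "\<nu> > 0" and \<nu>2: "\<nu>\<^sup>2 = (cmod w)\<^sup>2 - (Im z)\<^sup>2" using \<delta> by (simp_all add: \<nu>_def)
  have "\<nu>\<^sup>2 < (cmod w)\<^sup>2" using \<nu>2 \<omega> by simp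
  then have \<nu>w: "\<nu> < cmod w" by (rule power_less_imp_less_base) simp
  define m n where "m = Complex (cosh \<nu>) (Im z * sinh \<nu> / \<nu>)" and "n = of_real (sinh \<nu> / \<nu>) * w"
  have nn: "cmod n = \<bar>sinh \<nu> / \<nu>\<bar> * cmod w" unfolding n_def norm_mult norm_of_real ..
  have "mexp (rmat z w) = rmat (of_real (exp (Re z)) * m) (of_real (exp (Re z)) * n)"
    using mexp_rmat_hyperbolic[OF \<delta>] by (simp add: \<nu>_def[symmetric] m_def n_def complex_eq_iff algebra_simps)
  moreover have "(cmod m)\<^sup>2 - (cmod n)\<^sup>2 = (cosh \<nu>)\<^sup>2 - (sinh \<nu> / \<nu>)\<^sup>2 * \<nu>\<^sup>2"
  proof -
    have "(cmod m)\<^sup>2 = (cosh \<nu>)\<^sup>2 + (Im z)\<^sup>2 * (sinh \<nu> / \<nu>)\<^sup>2"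
      by (simp add: m_def cmod_power2 power_mult_distrib power_divide)
    moreover have "(cmod n)\<^sup>2 = (sinh \<nu> / \<nu>)\<^sup>2 * (cmod w)\<^sup>2" by (simp only: nn power_mult_distrib power2_abs)
    ultimately show ?thesis by (simp add: \<nu>2 algebra_simps)
  qed
  then have "(cmod m)\<^sup>2 - (cmod n)\<^sup>2 = 1" using \<nu>0 by (simp add: power_divide cosh_square_eq)
  moreover have "cmod n < sinh (cmod w)"
  proof -
    have "cmod n = sinh \<nu> / \<nu> * cmod w" using nn \<nu>0 by simp
    also have "\<dots> < sinh (cmod w) / cmod w * cmod w"
      using sinh_div_strict_mono[OF \<nu>0 \<nu>w] \<nu>0 \<nu>w by (intro mult_strict_right_mono) auto
    finally show ?thesis using \<nu>0 \<nu>w by (simp split: if_splits)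
  qed
  moreover have "\<bar>Arg m\<bar> < \<bar>Im z\<bar>"
  proof -
    have "Arg m = arctan (Im m / Re m)" by (rule arg_conv_arctan) (simp add: m_def)
    then have "\<bar>Arg m\<bar> \<le> \<bar>Im z\<bar> * (sinh \<nu> / (\<nu> * cosh \<nu>))"
      using abs_arctan_le[of "Im m / Re m"] \<nu>0 by (simp add: m_def abs_mult)
    also have "\<dots> < \<bar>Im z\<bar> * 1"
    proof -
      have "sinh \<nu> / (\<nu> * cosh \<nu>) < 1" using sinh_less_mult_cosh[OF \<nu>0] \<nu>0 by simp
      then show ?thesis using \<omega> by (intro mult_strict_left_mono) auto
    qed
    finally show ?thesis by simp
  qed
  ultimately show ?thesis by (rule cheaper_exp_factorization_polar)
qed

lemma cheaper_exp_factorization_rmat_parabolic: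
  assumes w: "w \<noteq> 0" and \<delta>: "(cmod w)\<^sup>2 = (Im z)\<^sup>2"
  shows "cheaper_exp_factorization (rmat z w)"
proof (rule cheaper_exp_factorization_polar)
  show "mexp (rmat z w) = rmat (of_real (exp (Re z)) * Complex 1 (Im z)) (of_real (exp (Re z)) * w)"
    using mexp_rmat_parabolic[OF \<delta>] by (simp add: complex_eq_iff algebra_simps)
  show "(cmod (Complex 1 (Im z)))\<^sup>2 - (cmod w)\<^sup>2 = 1" using \<delta> by (simp add: cmod_power2)
  show "cmod w < sinh (cmod w)" using less_sinh_self[of "cmod w"] w by simp
  have "(cmod w)\<^sup>2 > 0" using w by simp
  then have "Im z \<noteq> 0" using \<delta> by auto
  then show "\<bar>Arg (Complex 1 (Im z))\<bar> < \<bar>Im z\<bar>"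
    using abs_arctan_less by (subst arg_conv_arctan) simp_all
qed

theorem magnus_mexp_less_opnorm_real2:
  fixes A :: "real^2^2"
  assumes "\<not> normal_real A"
  shows "magnus (mexp A) < ereal (opnorm A)"
proof -
  obtain z w where A: "A = rmat z w" by (rule rmat_cases)
  have w: "w \<noteq> 0" and \<omega>: "Im z \<noteq> 0" using assms normal_real_rmat unfolding A by auto
  have "cheaper_exp_factorization (rmat z w)"
  proof (cases "(cmod w)\<^sup>2" "(Im z)\<^sup>2" rule: linorder_cases)
    case less then show ?thesis by (rule cheaper_exp_factorization_rmat_elliptic[OF w])
  next
    case equal then show ?thesis by (rule cheaper_exp_factorization_rmat_parabolic[OF w])
  next
    case greater then show ?thesis by (rule cheaper_exp_factorization_rmat_hyperbolic[OF \<omega>])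
  qed
  then show ?thesis unfolding A by (rule magnus_mexp_less_opnorm)
qed

theorem theorem5p1:
  shows "(\<forall>A :: real^2^2. \<not> normal_real A \<longrightarrow> magnus (mexp A) < ereal (opnorm A)) \<and>
         (\<forall>A :: complex^2^2. \<not> normal_complex A \<longrightarrow> magnus (mexp A) < ereal (opnorm A))"
  using magnus_mexp_less_opnorm_real2 magnus_mexp_less_opnorm_complex2 by blast

end
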